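(* Let $\mathbb{F}$ be a field of characteristic zero, $P_n=\mathbb{F}[x_1,\dots,x_n]$, and for a positive integer $a$ let $I_{n,a}=\big(x_1^a,\dots,x_n^a,(x_1+\cdots+x_n)^a\big)\subseteq P_n$. Let $n,a,d$ be positive integers with $d\ge a\ge 2$, and set $N(a,d)=\left\lceil \frac{2d}{a-1}\right\rceil$. If $n\ge N(a,d)+\frac{2d-1}{a-1}$, then for a general linear form $L\in P_n$ the map $(P_n/I_{n,a})_{d-1}\to (P_n/I_{n,a})_d$ given by multiplication by $L$ is injective.
   Context: For a graded ring $R$, $R_d$ denotes its degree-$d$ graded piece. "General linear form" means a linear form lying in a nonempty Zariski-open subset of the space of linear forms. *)

theory Defs
  imports "HOL-Analysis.Analysis" "HOL-Library.Poly_Mapping"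
begin

text \<open>Multivariate polynomials over 'a in variables x_0, x_1, ... are represented
  as finitely supported maps from monomials (exponent vectors nat =>0 nat)
  to coefficients; the ring structure is the one from HOL-Library.Poly_Mapping.\<close>

type_synonym 'a mpoly = "(nat \<Rightarrow>\<^sub>0 nat) \<Rightarrow>\<^sub>0 'a"

definition mvar :: "nat \<Rightarrow> 'a::comm_ring_1 mpoly" where
  "mvar i = Poly_Mapping.single (Poly_Mapping.single i 1) 1"

definition mon_deg :: "(nat \<Rightarrow>\<^sub>0 nat) \<Rightarrow> nat" where
  "mon_deg m = (\<Sum>i\<in>Poly_Mapping.keys m. Poly_Mapping.lookup m i)"

definition polys :: "nat \<Rightarrow> 'a::comm_ring_1 mpoly set" where
  "polys n = {p. \<forall>m\<in>Poly_Mapping.keys p. Poly_Mapping.keys m \<subseteq> {..<n}}"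

definition homog :: "nat \<Rightarrow> nat \<Rightarrow> 'a::comm_ring_1 mpoly set" where
  "homog n d = {p \<in> polys n. \<forall>m\<in>Poly_Mapping.keys p. mon_deg m = d}"

definition gen_ideal :: "nat \<Rightarrow> 'a::comm_ring_1 mpoly list \<Rightarrow> 'a mpoly set" where
  "gen_ideal n gs = {\<Sum>j<length gs. c j * gs ! j | c. \<forall>j<length gs. c j \<in> polys n}"

definition I_na :: "nat \<Rightarrow> nat \<Rightarrow> 'a::comm_ring_1 mpoly set" where
  "I_na n a = gen_ideal n (map (\<lambda>i. mvar i ^ a) [0..<n] @ [(\<Sum>i<n. mvar i) ^ a])"

text \<open>Multiplication by L from (P_n/I)_{d-1} to (P_n/I)_d is injective
  (elements of (P_n/I)_k are classes of homogeneous forms of degree k modulo I).\<close>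
definition mult_injective :: "nat \<Rightarrow> 'a::comm_ring_1 mpoly set \<Rightarrow> 'a mpoly \<Rightarrow> nat \<Rightarrow> bool" where
  "mult_injective n I L d \<longleftrightarrow>
     (\<forall>f\<in>homog n (d - 1). L * f \<in> I \<longrightarrow> f \<in> I)"

definition lin_form :: "nat \<Rightarrow> (nat \<Rightarrow> 'a::comm_ring_1) \<Rightarrow> 'a mpoly" where
  "lin_form n c = (\<Sum>i<n. Poly_Mapping.single (Poly_Mapping.single i 1) (c i))"

definition mpeval :: "'a::comm_ring_1 mpoly \<Rightarrow> (nat \<Rightarrow> 'a) \<Rightarrow> 'a" where
  "mpeval p c = (\<Sum>m\<in>Poly_Mapping.keys p. Poly_Mapping.lookup p m * (\<Prod>i\<in>Poly_Mapping.keys m. c i ^ Poly_Mapping.lookup m i))"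

definition affine_space :: "nat \<Rightarrow> (nat \<Rightarrow> 'a::zero) set" where
  "affine_space n = {c. \<forall>i\<ge>n. c i = 0}"

definition zariski_open :: "nat \<Rightarrow> (nat \<Rightarrow> 'a::comm_ring_1) set \<Rightarrow> bool" where
  "zariski_open n U \<longleftrightarrow> (\<exists>S\<subseteq>polys n. U = {c\<in>affine_space n. \<exists>g\<in>S. mpeval g c \<noteq> 0})"

definition general_linear_form :: "nat \<Rightarrow> ('a::comm_ring_1 mpoly \<Rightarrow> bool) \<Rightarrow> bool" where
  "general_linear_form n Q \<longleftrightarrow>
     (\<exists>U. zariski_open n U \<and> U \<noteq> {} \<and> (\<forall>c\<in>U. Q (lin_form n c)))"

end

theory Submission
  imports Defs "Jordan_Normal_Form.Determinant"
begin

(* Write L_S for the sum of the variables x_i, i \<in> S, and D_S for the operator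
  x^m \<mapsto> \<Sum>i\<in>S. m_i (a - m_i) x^(m - e_i).  Modulo J = (x_0^a, ..., x_(n-1)^a) they generate an
  sl_2-action: on forms of degree k in the variables of S, [D_S, L_S] is multiplication by
  |S|(a-1) - 2k.  Hence every set Q closed under linear combinations, L_S and D_S satisfies
  L_S^s h \<in> Q \<Longrightarrow> h \<in> Q whenever h has degree k in S and s + 2k \<le> |S|(a-1).

  For L = x_0 + ... + x_(N-1) this gives injectivity.  If L f = j + (x_0 + ... + x_(n-1))^a g with
  j \<in> J, then modulo L P + J the power is (x_N + ... + x_(n-1))^a, which the cancellation with
  S = {N..<n} removes: g = L u + j'.  Then L (f - (x_0 + ... + x_(n-1))^a u) \<in> J, and the
  cancellation with S = {..<N} and Q = J removes L.  The hypotheses on N and n - N are exactly the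
  bounds these two cancellations need.

  Injectivity modulo I of multiplication by L_c = \<Sum>k. c_k x_k is an open condition on c: it
  follows from the non-vanishing of a determinant whose entries are linear forms in c and which
  is the identity matrix at the c giving x_0 + ... + x_(N-1). *)

abbreviation mpoly_smult :: "'a::comm_ring_1 \<Rightarrow> 'a mpoly \<Rightarrow> 'a mpoly" where
  "mpoly_smult c p \<equiv> Poly_Mapping.single 0 c * p"

interpretation mpoly: vector_space "mpoly_smult :: 'a::field \<Rightarrow> 'a mpoly \<Rightarrow> 'a mpoly"
  by unfold_locales
    (simp_all add: distrib_left distrib_right single_add mult.assoc[symmetric] mult_single)

section \<open>Monomial expansions and evaluation\<close>

lemma mpoly_eq_sum_singles:
  "p = (\<Sum>m\<in>Poly_Mapping.keys p. Poly_Mapping.single m (Poly_Mapping.lookup p m))"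
proof (rule poly_mapping_eqI)
  fix k
  show "Poly_Mapping.lookup p k =
        Poly_Mapping.lookup (\<Sum>m\<in>Poly_Mapping.keys p. Poly_Mapping.single m (Poly_Mapping.lookup p m)) k"
    by (cases "k \<in> Poly_Mapping.keys p") (auto simp: lookup_sum lookup_single when_def in_keys_iff)
qed

lemma mpoly_induct_keys[consumes 1, case_names zero single add]:
  fixes p :: "'a::comm_ring_1 mpoly"
  assumes "\<forall>m\<in>Poly_Mapping.keys p. Q m" "P 0" "\<And>m c. Q m \<Longrightarrow> P (Poly_Mapping.single m c)"
    "\<And>p q. P p \<Longrightarrow> P q \<Longrightarrow> P (p + q)"
  shows "P p"
proof -
  have "A \<subseteq> Poly_Mapping.keys p \<Longrightarrow> P (\<Sum>m\<in>A. Poly_Mapping.single m (Poly_Mapping.lookup p m))" for A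
  proof (induction A rule: infinite_finite_induct)
    case (infinite A)
    then show ?case
      using finite_subset[OF _ finite_keys] by blast
  qed (use assms in simp_all)
  then show ?thesis by (metis order_refl mpoly_eq_sum_singles)
qed

lemma mpoly_induct[case_names zero single add]:
  fixes p :: "'a::comm_ring_1 mpoly"
  assumes "P 0" "\<And>m c. P (Poly_Mapping.single m c)" "\<And>p q. P p \<Longrightarrow> P q \<Longrightarrow> P (p + q)"
  shows "P p"
  using mpoly_induct_keys[of p "\<lambda>_. True" P] assms by auto

lemma mpoly_smult_single: "mpoly_smult c (Poly_Mapping.single m d) = Poly_Mapping.single m (c * d)"
  by (simp add: mult_single)

lemma mpoly_smult_smult: "mpoly_smult c (mpoly_smult d p) = mpoly_smult (c * d) p"
  by (simp add: mult.assoc[symmetric] mult_single)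

lemma mpoly_smult_add_left: "mpoly_smult c p + mpoly_smult d p = mpoly_smult (c + d) p"
  by (simp add: single_add distrib_right)

definition mon_extend :: "((nat \<Rightarrow>\<^sub>0 nat) \<Rightarrow> 'a::comm_ring_1 mpoly) \<Rightarrow> 'a mpoly \<Rightarrow> 'a mpoly" where
  "mon_extend F p = (\<Sum>m\<in>Poly_Mapping.keys p. mpoly_smult (Poly_Mapping.lookup p m) (F m))"

lemma mon_extend_add: "mon_extend F (p + q) = mon_extend F p + mon_extend F q"
  unfolding mon_extend_def
  by (rule setsum_keys_plus_distrib) (auto simp: single_add distrib_right)

lemma mon_extend_zero[simp]: "mon_extend F 0 = 0"
  by (simp add: mon_extend_def)

lemma mon_extend_single[simp]: "mon_extend F (Poly_Mapping.single m c) = mpoly_smult c (F m)"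
  by (cases "c = 0") (auto simp: mon_extend_def)

lemma mon_extend_sum: "mon_extend F (\<Sum>i\<in>A. f i) = (\<Sum>i\<in>A. mon_extend F (f i))"
  by (induction A rule: infinite_finite_induct) (auto simp: mon_extend_add)

lemma mon_extend_smult: "mon_extend F (mpoly_smult c p) = mpoly_smult c (mon_extend F p)"
  by (induction p rule: mpoly_induct)
    (simp_all add: mpoly_smult_single mpoly_smult_smult distrib_left mon_extend_add)

definition mon_eval :: "(nat \<Rightarrow>\<^sub>0 nat) \<Rightarrow> (nat \<Rightarrow> 'a::comm_ring_1) \<Rightarrow> 'a" where
  "mon_eval m c = (\<Prod>i\<in>Poly_Mapping.keys m. c i ^ Poly_Mapping.lookup m i)"

lemma keys_add_nat:
  "Poly_Mapping.keys ((m1::nat \<Rightarrow>\<^sub>0 nat) + m2) = Poly_Mapping.keys m1 \<union> Poly_Mapping.keys m2"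
  by (auto simp: in_keys_iff lookup_add)

lemma mon_eval_eq_prod:
  "finite A \<Longrightarrow> Poly_Mapping.keys m \<subseteq> A \<Longrightarrow> mon_eval m c = (\<Prod>i\<in>A. c i ^ Poly_Mapping.lookup m i)"
  unfolding mon_eval_def by (rule prod.mono_neutral_left) (auto simp: in_keys_iff)

lemma mon_eval_add: "mon_eval (m1 + m2) c = mon_eval m1 c * mon_eval m2 c"
proof -
  let ?A = "Poly_Mapping.keys m1 \<union> Poly_Mapping.keys m2"
  have "mon_eval (m1 + m2) c = (\<Prod>i\<in>?A. c i ^ Poly_Mapping.lookup (m1 + m2) i)"
    by (rule mon_eval_eq_prod) (auto simp: keys_add_nat)
  also have "\<dots> = (\<Prod>i\<in>?A. c i ^ Poly_Mapping.lookup m1 i) * (\<Prod>i\<in>?A. c i ^ Poly_Mapping.lookup m2 i)"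
    by (simp add: lookup_add power_add prod.distrib)
  also have "\<dots> = mon_eval m1 c * mon_eval m2 c"
    by (subst (1 2) mon_eval_eq_prod[symmetric]) auto
  finally show ?thesis .
qed

lemma mpeval_eq_sum:
  "mpeval p c = (\<Sum>m\<in>Poly_Mapping.keys p. Poly_Mapping.lookup p m * mon_eval m c)"
  by (simp add: mpeval_def mon_eval_def)

lemma mpeval_add: "mpeval (p + q) c = mpeval p c + mpeval q c"
  unfolding mpeval_eq_sum by (rule setsum_keys_plus_distrib) (auto simp: distrib_right)

lemma mpeval_zero[simp]: "mpeval 0 c = 0"
  by (simp add: mpeval_eq_sum)

lemma mpeval_single[simp]: "mpeval (Poly_Mapping.single m a) c = a * mon_eval m c"
  by (cases "a = 0") (auto simp: mpeval_eq_sum)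

lemma mpeval_mult: "mpeval (p * q) c = mpeval p c * mpeval q c"
proof (induction p rule: mpoly_induct)
  case (single m a)
  show ?case
    by (induction q rule: mpoly_induct) (simp_all add: mult_single mon_eval_add distrib_left mpeval_add)
qed (simp_all add: distrib_right mpeval_add)

lemma mpeval_sum: "mpeval (\<Sum>i\<in>A. f i) c = (\<Sum>i\<in>A. mpeval (f i) c)"
  by (induction A rule: infinite_finite_induct) (auto simp: mpeval_add)

lemma comm_ring_hom_mpeval: "comm_ring_hom (\<lambda>p. mpeval p c)"
proof
  show "mpeval 1 c = 1"
    using mpeval_single[of 0 1 c] by (simp add: mon_eval_def del: mpeval_single)
qed (simp_all add: mpeval_add mpeval_mult)

section \<open>Supports and partial degrees\<close>

definition var_exp :: "nat \<Rightarrow> (nat \<Rightarrow>\<^sub>0 nat)" where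
  "var_exp i = Poly_Mapping.single i 1"

lemma lookup_var_exp: "Poly_Mapping.lookup (var_exp i) j = (if i = j then 1 else 0)"
  by (simp add: var_exp_def lookup_single when_def)

lemma keys_var_exp: "Poly_Mapping.keys (var_exp i) = {i}"
  by (simp add: var_exp_def)

lemma mon_eval_var_exp[simp]: "mon_eval (var_exp i) c = c i"
  by (simp add: var_exp_def mon_eval_def)

lemma mvar_eq_single: "mvar i = Poly_Mapping.single (var_exp i) 1"
  by (simp add: mvar_def var_exp_def)

lemma mvar_pow: "mvar i ^ k = Poly_Mapping.single (Poly_Mapping.single i k) (1::'a::comm_ring_1)"
proof (induction k)
  case (Suc k)
  have "mvar i ^ Suc k = mvar i * Poly_Mapping.single (Poly_Mapping.single i k) (1::'a)"
    by (simp only: power_Suc Suc.IH)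
  also have "\<dots> = Poly_Mapping.single (Poly_Mapping.single i 1 + Poly_Mapping.single i k) 1"
    by (simp add: mvar_def mult_single)
  finally show ?case by (simp flip: single_add)
qed simp

lemma keys_smult_subset: "Poly_Mapping.keys (mpoly_smult c p) \<subseteq> Poly_Mapping.keys p"
  using keys_mult[of "Poly_Mapping.single 0 c" p] by (auto split: if_splits)

lemma polys_add: "p \<in> polys n \<Longrightarrow> q \<in> polys n \<Longrightarrow> p + q \<in> polys n"
  unfolding polys_def using keys_add[of p q] by blast

lemma polys_mult: "p \<in> polys n \<Longrightarrow> q \<in> polys n \<Longrightarrow> p * q \<in> polys n"
  unfolding polys_def using keys_mult[of p q] by (force simp: keys_add_nat)

lemma polys_uminus: "p \<in> polys n \<Longrightarrow> - p \<in> polys n"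
  unfolding polys_def by simp

lemma polys_diff: "p \<in> polys n \<Longrightarrow> q \<in> polys n \<Longrightarrow> p - q \<in> polys n"
  using polys_add[of p n "-q"] polys_uminus[of q n] by simp

lemma polys_zero[simp]: "0 \<in> polys n"
  by (simp add: polys_def)

lemma polys_single: "Poly_Mapping.keys m \<subseteq> {..<n} \<Longrightarrow> Poly_Mapping.single m c \<in> polys n"
  by (simp add: polys_def)

lemma polys_one[simp]: "1 \<in> polys n"
  by (simp add: polys_def)

lemma polys_sum: "(\<And>i. i \<in> A \<Longrightarrow> f i \<in> polys n) \<Longrightarrow> (\<Sum>i\<in>A. f i) \<in> polys n"
  by (induction A rule: infinite_finite_induct) (auto intro: polys_add)

lemma polys_prod: "(\<And>i. i \<in> A \<Longrightarrow> f i \<in> polys n) \<Longrightarrow> (\<Prod>i\<in>A. f i) \<in> polys n"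
  by (induction A rule: infinite_finite_induct) (auto intro: polys_mult)

lemma polys_pow: "p \<in> polys n \<Longrightarrow> p ^ k \<in> polys n"
  by (induction k) (auto intro: polys_mult)

lemma polys_mvar: "i < n \<Longrightarrow> mvar i \<in> polys n"
  by (simp add: mvar_def polys_def)

lemma polys_smult: "p \<in> polys n \<Longrightarrow> mpoly_smult c p \<in> polys n"
  by (rule polys_mult[OF polys_single]) auto

definition deg_in :: "nat set \<Rightarrow> (nat \<Rightarrow>\<^sub>0 nat) \<Rightarrow> nat" where
  "deg_in S m = (\<Sum>i\<in>S. Poly_Mapping.lookup m i)"

definition homog_in :: "nat set \<Rightarrow> nat \<Rightarrow> 'a::comm_ring_1 mpoly \<Rightarrow> bool" where
  "homog_in S k p \<longleftrightarrow> (\<forall>m\<in>Poly_Mapping.keys p. deg_in S m = k)"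

lemma deg_in_add: "deg_in S (m1 + m2) = deg_in S m1 + deg_in S m2"
  by (simp add: deg_in_def lookup_add sum.distrib)

lemma deg_in_zero[simp]: "deg_in S 0 = 0"
  by (simp add: deg_in_def)

lemma deg_in_var_exp: "finite S \<Longrightarrow> deg_in S (var_exp i) = (if i \<in> S then 1 else 0)"
  by (simp add: deg_in_def lookup_var_exp)

lemma deg_in_mono: "S \<subseteq> T \<Longrightarrow> finite T \<Longrightarrow> deg_in S m \<le> deg_in T m"
  unfolding deg_in_def by (rule sum_mono2) auto

lemma mon_deg_eq_deg_in: "Poly_Mapping.keys m \<subseteq> {..<n} \<Longrightarrow> mon_deg m = deg_in {..<n} m"
  unfolding mon_deg_def deg_in_def by (rule sum.mono_neutral_left) (auto simp: in_keys_iff)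

lemma homog_iff_homog_in: "p \<in> homog n k \<longleftrightarrow> p \<in> polys n \<and> homog_in {..<n} k p"
proof -
  have "mon_deg m = deg_in {..<n} m" if "p \<in> polys n" "m \<in> Poly_Mapping.keys p" for m
    using that by (intro mon_deg_eq_deg_in) (auto simp: polys_def)
  then show ?thesis
    unfolding homog_def homog_in_def by auto
qed

lemma homog_in_mult: "homog_in S k p \<Longrightarrow> homog_in S l q \<Longrightarrow> homog_in S (k + l) (p * q)"
  unfolding homog_in_def using keys_mult[of p q] by (force simp: deg_in_add)

lemma homog_in_add: "homog_in S k p \<Longrightarrow> homog_in S k q \<Longrightarrow> homog_in S k (p + q)"
  unfolding homog_in_def using keys_add[of p q] by blast

lemma homog_in_zero[simp]: "homog_in S k 0"
  by (simp add: homog_in_def)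

lemma homog_in_one[simp]: "homog_in S 0 1"
  by (simp add: homog_in_def)

lemma homog_in_sum: "(\<And>i. i \<in> A \<Longrightarrow> homog_in S k (f i)) \<Longrightarrow> homog_in S k (\<Sum>i\<in>A. f i)"
  by (induction A rule: infinite_finite_induct) (auto intro: homog_in_add)

lemma homog_in_pow: "homog_in S k p \<Longrightarrow> homog_in S (k * s) (p ^ s)"
  by (induction s) (auto dest: homog_in_mult[of S k p])

lemma homog_in_single: "homog_in S (deg_in S m) (Poly_Mapping.single m c)"
  by (simp add: homog_in_def)

lemma homog_in_mvar: "finite S \<Longrightarrow> homog_in S (if i \<in> S then 1 else 0) (mvar i)"
  using homog_in_single[of S "var_exp i" 1] by (simp add: mvar_eq_single deg_in_var_exp)

definition var_sum :: "nat set \<Rightarrow> 'a::comm_ring_1 mpoly" where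
  "var_sum S = (\<Sum>i\<in>S. mvar i)"

lemma homog_in_var_sum:
  assumes "finite T" "S \<subseteq> T"
  shows "homog_in T 1 (var_sum S)"
  unfolding var_sum_def
proof (rule homog_in_sum)
  fix i assume "i \<in> S"
  with assms homog_in_mvar[of T i] show "homog_in T 1 (mvar i)" by auto
qed

lemma homog_in_var_sum_disjoint:
  assumes "finite T" "S \<inter> T = {}"
  shows "homog_in T 0 (var_sum S)"
  unfolding var_sum_def
proof (rule homog_in_sum)
  fix i assume "i \<in> S"
  with assms have "i \<notin> T" by blast
  with assms(1) homog_in_mvar[of T i] show "homog_in T 0 (mvar i)" by simp
qed

lemma polys_var_sum: "S \<subseteq> {..<n} \<Longrightarrow> var_sum S \<in> polys n"
  unfolding var_sum_def by (auto intro!: polys_sum polys_mvar)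

lemma var_sum_split: "N \<le> n \<Longrightarrow> var_sum {..<n} = var_sum {..<N} + var_sum {N..<n}"
  unfolding var_sum_def lessThan_atLeast0 by (simp add: sum.atLeastLessThan_concat)

lemma keys_var_sum:
  assumes "m \<in> Poly_Mapping.keys (var_sum S :: 'a::comm_ring_1 mpoly)"
  shows "\<exists>i\<in>S. m = var_exp i"
proof -
  obtain i where "i \<in> S" "m \<in> Poly_Mapping.keys (mvar i :: 'a mpoly)"
    using assms keys_sum[of "\<lambda>i. mvar i :: 'a mpoly" S] unfolding var_sum_def by auto
  then show ?thesis by (auto simp: mvar_eq_single split: if_splits)
qed

definition filter_mons :: "((nat \<Rightarrow>\<^sub>0 nat) \<Rightarrow> bool) \<Rightarrow> 'a::comm_ring_1 mpoly \<Rightarrow> 'a mpoly" where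
  "filter_mons P p = Poly_Mapping.mapp (\<lambda>m c. if P m then c else 0) p"

lemma lookup_filter_mons:
  "Poly_Mapping.lookup (filter_mons P p) m = (if P m then Poly_Mapping.lookup p m else 0)"
  by (auto simp: filter_mons_def lookup_mapp when_def in_keys_iff)

lemma filter_mons_zero[simp]: "filter_mons P 0 = 0"
  by (rule poly_mapping_eqI) (simp add: lookup_filter_mons)

lemma filter_mons_add: "filter_mons P (p + q) = filter_mons P p + filter_mons P q"
  by (rule poly_mapping_eqI) (simp add: lookup_filter_mons lookup_add)

lemma filter_mons_diff: "filter_mons P (p - q) = filter_mons P p - filter_mons P q"
  by (rule poly_mapping_eqI) (simp add: lookup_filter_mons lookup_minus)

lemma filter_mons_single:
  "filter_mons P (Poly_Mapping.single m c) = (if P m then Poly_Mapping.single m c else 0)"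
  by (rule poly_mapping_eqI) (simp add: lookup_filter_mons lookup_single when_def)

lemma keys_filter_mons: "Poly_Mapping.keys (filter_mons P p) \<subseteq> {m \<in> Poly_Mapping.keys p. P m}"
  by (auto simp: in_keys_iff lookup_filter_mons split: if_splits)

lemma polys_filter_mons: "p \<in> polys n \<Longrightarrow> filter_mons P p \<in> polys n"
  unfolding polys_def using keys_filter_mons by blast

definition deg_part :: "nat set \<Rightarrow> nat \<Rightarrow> 'a::comm_ring_1 mpoly \<Rightarrow> 'a mpoly" where
  "deg_part S t = filter_mons (\<lambda>m. deg_in S m = t)"

lemma deg_part_add: "deg_part S t (p + q) = deg_part S t p + deg_part S t q"
  unfolding deg_part_def by (rule filter_mons_add)

lemma deg_part_diff: "deg_part S t (p - q) = deg_part S t p - deg_part S t q"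
  unfolding deg_part_def by (rule filter_mons_diff)

lemma polys_deg_part: "p \<in> polys n \<Longrightarrow> deg_part S t p \<in> polys n"
  unfolding deg_part_def by (rule polys_filter_mons)

lemma homog_in_deg_part: "homog_in S t (deg_part S t p)"
  unfolding homog_in_def deg_part_def using keys_filter_mons by blast

lemma deg_part_homog_in: "homog_in S t p \<Longrightarrow> deg_part S t p = p"
  by (rule poly_mapping_eqI) (auto simp: deg_part_def lookup_filter_mons homog_in_def in_keys_iff)

lemma deg_part_mult_homog_in:
  assumes "homog_in S e q"
  shows "deg_part S t (q * p) = (if e \<le> t then q * deg_part S (t - e) p else 0)"
proof (induction p rule: mpoly_induct)
  case (single m c)
  have "\<forall>m'\<in>Poly_Mapping.keys q. deg_in S m' = e"
    using assms by (simp add: homog_in_def)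
  then show ?case
  proof (induction q rule: mpoly_induct_keys)
    case (single m' c')
    have "deg_part S t (Poly_Mapping.single m' c' * Poly_Mapping.single m c) =
          (if e + deg_in S m = t then Poly_Mapping.single (m' + m) (c' * c) else 0)"
      using single by (simp add: mult_single deg_part_def filter_mons_single deg_in_add)
    moreover have "deg_part S (t - e) (Poly_Mapping.single m c) =
          (if deg_in S m = t - e then Poly_Mapping.single m c else 0)"
      by (simp add: deg_part_def filter_mons_single)
    ultimately show ?case by (auto simp: mult_single)
  next
    case (add q1 q2)
    then show ?case by (cases "e \<le> t") (simp_all add: deg_part_add distrib_right)
  qed (simp add: deg_part_def)
next
  case (add p1 p2)
  then show ?case by (cases "e \<le> t") (simp_all add: deg_part_add distrib_left)
qed (simp add: deg_part_def)

lemma mpoly_eq_sum_deg_parts: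
  assumes "\<forall>m\<in>Poly_Mapping.keys p. deg_in S m \<le> T"
  shows "p = (\<Sum>t\<le>T. deg_part S t p)"
proof (rule poly_mapping_eqI)
  fix m
  show "Poly_Mapping.lookup p m = Poly_Mapping.lookup (\<Sum>t\<le>T. deg_part S t p) m"
    using assms by (cases "m \<in> Poly_Mapping.keys p")
      (simp_all add: lookup_sum deg_part_def lookup_filter_mons in_keys_iff)
qed

section \<open>The monomial ideal and the ideal \<open>I_na\<close>\<close>

definition mon_ideal :: "nat \<Rightarrow> nat \<Rightarrow> 'a::comm_ring_1 mpoly set" where
  "mon_ideal n a = {p. \<forall>m\<in>Poly_Mapping.keys p. \<exists>i<n. a \<le> Poly_Mapping.lookup m i}"

lemma mon_ideal_zero[simp]: "0 \<in> mon_ideal n a"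
  by (simp add: mon_ideal_def)

lemma mon_ideal_add: "p \<in> mon_ideal n a \<Longrightarrow> q \<in> mon_ideal n a \<Longrightarrow> p + q \<in> mon_ideal n a"
  unfolding mon_ideal_def using keys_add[of p q] by blast

lemma mon_ideal_uminus: "p \<in> mon_ideal n a \<Longrightarrow> - p \<in> mon_ideal n a"
  by (simp add: mon_ideal_def)

lemma mon_ideal_mult:
  assumes "p \<in> mon_ideal n a"
  shows "q * p \<in> mon_ideal n a"
  unfolding mon_ideal_def
proof (intro CollectI ballI)
  fix m assume "m \<in> Poly_Mapping.keys (q * p)"
  then obtain m1 m2 where m: "m = m1 + m2" "m2 \<in> Poly_Mapping.keys p"
    using keys_mult[of q p] by blast
  then obtain i where "i < n" "a \<le> Poly_Mapping.lookup m2 i"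
    using assms by (auto simp: mon_ideal_def)
  then show "\<exists>i<n. a \<le> Poly_Mapping.lookup m i"
    unfolding m by (auto simp: lookup_add)
qed

lemma mon_ideal_sum: "(\<And>i. i \<in> A \<Longrightarrow> f i \<in> mon_ideal n a) \<Longrightarrow> (\<Sum>i\<in>A. f i) \<in> mon_ideal n a"
  by (induction A rule: infinite_finite_induct) (auto intro: mon_ideal_add)

lemma mon_ideal_deg_part: "p \<in> mon_ideal n a \<Longrightarrow> deg_part S t p \<in> mon_ideal n a"
  unfolding mon_ideal_def deg_part_def using keys_filter_mons by blast

lemma mon_ideal_mvar_pow: "i < n \<Longrightarrow> mvar i ^ a \<in> mon_ideal n a"
  by (auto simp: mvar_pow mon_ideal_def)

lemma mpoly_subspace_mon_ideal: "mpoly.subspace (mon_ideal n a :: 'a::field mpoly set)"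
  unfolding mpoly.subspace_def by (simp add: mon_ideal_add mon_ideal_mult)

lemma gen_ideal_zero: "0 \<in> gen_ideal n gs"
  unfolding gen_ideal_def by (auto intro!: exI[of _ "\<lambda>_. 0"])

lemma gen_ideal_add:
  assumes "p \<in> gen_ideal n gs" "q \<in> gen_ideal n gs"
  shows "p + q \<in> gen_ideal n gs"
proof -
  obtain c where c: "p = (\<Sum>j<length gs. c j * gs ! j)" "\<forall>j<length gs. c j \<in> polys n"
    using assms(1) unfolding gen_ideal_def by blast
  obtain c' where c': "q = (\<Sum>j<length gs. c' j * gs ! j)" "\<forall>j<length gs. c' j \<in> polys n"
    using assms(2) unfolding gen_ideal_def by blast
  have "p + q = (\<Sum>j<length gs. (c j + c' j) * gs ! j)"
    using c c' by (simp add: distrib_right sum.distrib)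
  moreover have "\<forall>j<length gs. c j + c' j \<in> polys n"
    using c c' by (auto intro: polys_add)
  ultimately show ?thesis
    unfolding gen_ideal_def by (intro CollectI exI[of _ "\<lambda>j. c j + c' j"]) simp
qed

lemma gen_ideal_mult:
  assumes "q \<in> polys n" "p \<in> gen_ideal n gs"
  shows "q * p \<in> gen_ideal n gs"
proof -
  obtain c where c: "p = (\<Sum>j<length gs. c j * gs ! j)" "\<forall>j<length gs. c j \<in> polys n"
    using assms(2) unfolding gen_ideal_def by blast
  have "q * p = (\<Sum>j<length gs. (q * c j) * gs ! j)"
    using c by (simp add: sum_distrib_left mult.assoc)
  moreover have "\<forall>j<length gs. q * c j \<in> polys n"
    using c assms(1) by (auto intro: polys_mult)
  ultimately show ?thesis
    unfolding gen_ideal_def by (intro CollectI exI[of _ "\<lambda>j. q * c j"]) simp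
qed

lemma gen_ideal_generator:
  assumes "k < length gs" "u \<in> polys n"
  shows "u * gs ! k \<in> gen_ideal n gs"
proof -
  let ?c = "\<lambda>j. if j = k then u else 0"
  have "(\<Sum>j<length gs. ?c j * gs ! j) = (\<Sum>j<length gs. if j = k then u * gs ! j else 0)"
    by (rule sum.cong) auto
  also have "\<dots> = u * gs ! k"
    using assms by (simp add: sum.delta')
  finally have "(\<Sum>j<length gs. ?c j * gs ! j) = u * gs ! k" .
  moreover have "\<forall>j<length gs. ?c j \<in> polys n"
    using assms by auto
  ultimately show ?thesis
    unfolding gen_ideal_def by (intro CollectI exI[of _ ?c]) simp
qed

lemma mpoly_subspace_I_na: "mpoly.subspace (I_na n a :: 'a::field mpoly set)"
  unfolding mpoly.subspace_def I_na_def
proof (intro conjI ballI allI)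
  fix c :: 'a and x :: "'a mpoly"
  assume "x \<in> gen_ideal n (map (\<lambda>i. mvar i ^ a) [0..<n] @ [(\<Sum>i<n. mvar i) ^ a])"
  then show "mpoly_smult c x \<in> gen_ideal n (map (\<lambda>i. mvar i ^ a) [0..<n] @ [(\<Sum>i<n. mvar i) ^ a])"
    by (intro gen_ideal_mult polys_single) auto
qed (simp_all add: gen_ideal_zero gen_ideal_add)

lemma I_na_zero[simp]: "0 \<in> I_na n a"
  unfolding I_na_def by (rule gen_ideal_zero)

lemma I_na_mult: "q \<in> polys n \<Longrightarrow> p \<in> I_na n a \<Longrightarrow> q * p \<in> I_na n a"
  unfolding I_na_def by (rule gen_ideal_mult)

lemma I_na_add: "p \<in> I_na n a \<Longrightarrow> q \<in> I_na n a \<Longrightarrow> p + q \<in> I_na n a"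
  unfolding I_na_def by (rule gen_ideal_add)

lemma I_na_mvar_pow: "i < n \<Longrightarrow> u \<in> polys n \<Longrightarrow> u * mvar i ^ a \<in> I_na n a"
  using gen_ideal_generator[of i "map (\<lambda>i. mvar i ^ a) [0..<n] @ [(\<Sum>i<n. mvar i) ^ a]" u n]
  by (simp add: I_na_def nth_append)

lemma I_na_var_sum_pow: "u \<in> polys n \<Longrightarrow> u * var_sum {..<n} ^ a \<in> I_na n a"
  using gen_ideal_generator[of n "map (\<lambda>i. mvar i ^ a) [0..<n] @ [(\<Sum>i<n. mvar i) ^ a]" u n]
  by (simp add: I_na_def nth_append var_sum_def)

lemma I_na_elim:
  assumes "p \<in> I_na n a"
  obtains j u where "j \<in> mon_ideal n a" "u \<in> polys n" "p = j + u * var_sum {..<n} ^ a"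
proof -
  let ?gs = "map (\<lambda>i. mvar i ^ a) [0..<n] @ [(\<Sum>i<n. mvar i) ^ a]"
  obtain c where c: "p = (\<Sum>j<Suc n. c j * ?gs ! j)" "\<forall>j<Suc n. c j \<in> polys n"
    using assms unfolding I_na_def gen_ideal_def by auto
  have "p = (\<Sum>j<n. c j * ?gs ! j) + c n * ?gs ! n"
    using c(1) by (simp only: sum.lessThan_Suc)
  also have "(\<Sum>j<n. c j * ?gs ! j) = (\<Sum>j<n. c j * mvar j ^ a)"
    by (rule sum.cong) (auto simp: nth_append)
  also have "?gs ! n = var_sum {..<n} ^ a"
    by (simp add: nth_append var_sum_def)
  finally have "p = (\<Sum>j<n. c j * mvar j ^ a) + c n * var_sum {..<n} ^ a" .
  moreover have "(\<Sum>j<n. c j * mvar j ^ a) \<in> mon_ideal n a"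
    by (intro mon_ideal_sum mon_ideal_mult mon_ideal_mvar_pow) simp
  ultimately show ?thesis
    using that c(2) by blast
qed

lemma keys_diff_nat_subset:
  "Poly_Mapping.keys ((m::nat \<Rightarrow>\<^sub>0 nat) - m') \<subseteq> Poly_Mapping.keys m"
  by (auto simp: in_keys_iff lookup_minus)

lemma single_eq_mult_mvar_pow:
  assumes "(a::nat) \<le> Poly_Mapping.lookup m i"
  shows "Poly_Mapping.single m v =
         Poly_Mapping.single (m - Poly_Mapping.single i a) v * (mvar i ^ a :: 'a::comm_ring_1 mpoly)"
proof -
  have "m - Poly_Mapping.single i a + Poly_Mapping.single i a = m"
    by (rule poly_mapping_eqI) (use assms in \<open>auto simp: lookup_add lookup_minus lookup_single when_def\<close>)
  moreover have "Poly_Mapping.single (m - Poly_Mapping.single i a) v * (mvar i ^ a :: 'a mpoly) =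
      Poly_Mapping.single (m - Poly_Mapping.single i a + Poly_Mapping.single i a) v"
    by (simp add: mvar_pow mult_single)
  ultimately show ?thesis by simp
qed

lemma mon_ideal_subset_I_na:
  fixes j :: "'a::comm_ring_1 mpoly"
  assumes "j \<in> mon_ideal n a" "j \<in> polys n"
  shows "j \<in> I_na n a"
proof -
  have single_mem: "Poly_Mapping.single m v \<in> I_na n a" if "m \<in> Poly_Mapping.keys j" for m and v :: 'a
  proof -
    from assms(1) that obtain i where i: "i < n" "a \<le> Poly_Mapping.lookup m i"
      by (auto simp: mon_ideal_def)
    have "Poly_Mapping.keys (m - Poly_Mapping.single i a) \<subseteq> Poly_Mapping.keys m"
      by (rule keys_diff_nat_subset)
    with assms(2) that have "Poly_Mapping.keys (m - Poly_Mapping.single i a) \<subseteq> {..<n}"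
      by (auto simp: polys_def)
    then have "Poly_Mapping.single (m - Poly_Mapping.single i a) v * mvar i ^ a \<in> I_na n a"
      using i(1) by (intro I_na_mvar_pow polys_single)
    then show ?thesis
      by (simp only: single_eq_mult_mvar_pow[OF i(2), symmetric])
  qed
  show ?thesis
    by (rule mpoly_induct_keys[of j "\<lambda>m. m \<in> Poly_Mapping.keys j" "\<lambda>p. p \<in> I_na n a"])
      (simp_all add: single_mem I_na_add)
qed

section \<open>The lowering operator\<close>

text \<open>On \<open>F[x_i]/(x_i^a)\<close>, multiplication by \<open>x_i\<close> and the operator
  \<open>x_i^k \<mapsto> k (a - k) x_i^(k-1)\<close> are the raising and lowering operators of a representation
  of \<open>sl_2\<close>; \<open>lower_op S a\<close> sums the lowering operators over the variables in \<open>S\<close>.  The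
  coefficient \<open>m_i (a - m_i)\<close> vanishes for \<open>m_i = 0\<close>, where the truncated exponent
  \<open>m - var_exp i\<close> would be wrong, and for \<open>m_i = a\<close>, which makes \<open>lower_op S a\<close> preserve
  \<open>mon_ideal n a\<close>.\<close>

definition lower_coeff :: "nat \<Rightarrow> (nat \<Rightarrow>\<^sub>0 nat) \<Rightarrow> nat \<Rightarrow> 'a::comm_ring_1" where
  "lower_coeff a m i = of_nat (Poly_Mapping.lookup m i) * (of_nat a - of_nat (Poly_Mapping.lookup m i))"

definition lower_mon :: "nat set \<Rightarrow> nat \<Rightarrow> (nat \<Rightarrow>\<^sub>0 nat) \<Rightarrow> 'a::comm_ring_1 mpoly" where
  "lower_mon S a m = (\<Sum>i\<in>S. Poly_Mapping.single (m - var_exp i) (lower_coeff a m i))"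

definition lower_op :: "nat set \<Rightarrow> nat \<Rightarrow> 'a::comm_ring_1 mpoly \<Rightarrow> 'a mpoly" where
  "lower_op S a = mon_extend (lower_mon S a)"

lemma lower_op_add: "lower_op S a (p + q) = lower_op S a p + lower_op S a q"
  by (simp add: lower_op_def mon_extend_add)

lemma lower_op_zero[simp]: "lower_op S a 0 = 0"
  by (simp add: lower_op_def)

lemma lower_op_single: "lower_op S a (Poly_Mapping.single m c) = mpoly_smult c (lower_mon S a m)"
  by (simp add: lower_op_def)

lemma lower_op_smult: "lower_op S a (mpoly_smult c p) = mpoly_smult c (lower_op S a p)"
  by (simp add: lower_op_def mon_extend_smult)

lemma lower_op_sum: "lower_op S a (\<Sum>i\<in>A. f i) = (\<Sum>i\<in>A. lower_op S a (f i))"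
  by (simp add: lower_op_def mon_extend_sum)

lemma keys_lower_op:
  assumes "m' \<in> Poly_Mapping.keys (lower_op S a (p :: 'a::comm_ring_1 mpoly))"
  obtains m i where "m \<in> Poly_Mapping.keys p" "i \<in> S" "lower_coeff a m i \<noteq> (0::'a)"
    "m = m' + var_exp i"
proof -
  obtain m where m: "m \<in> Poly_Mapping.keys p" "m' \<in> Poly_Mapping.keys (lower_mon S a m :: 'a mpoly)"
    using assms keys_sum[of "\<lambda>m. mpoly_smult (Poly_Mapping.lookup p m) (lower_mon S a m)"]
      keys_smult_subset by (fastforce simp: lower_op_def mon_extend_def)
  then obtain i where i: "i \<in> S"
    "m' \<in> Poly_Mapping.keys (Poly_Mapping.single (m - var_exp i) (lower_coeff a m i :: 'a))"
    using keys_sum[of "\<lambda>i. Poly_Mapping.single (m - var_exp i) (lower_coeff a m i :: 'a)" S]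
    by (auto simp: lower_mon_def)
  then have coeff: "lower_coeff a m i \<noteq> (0::'a)" and m': "m' = m - var_exp i"
    by (auto split: if_splits)
  have "Poly_Mapping.lookup m i \<noteq> 0"
  proof
    assume "Poly_Mapping.lookup m i = 0"
    with coeff show False by (simp add: lower_coeff_def)
  qed
  then have "m = m' + var_exp i"
    unfolding m' by (intro poly_mapping_eqI) (auto simp: lookup_add lookup_minus lookup_var_exp)
  with m(1) i(1) coeff show ?thesis
    using that by blast
qed

lemma deg_in_keys_lower_op:
  assumes "finite S" "m' \<in> Poly_Mapping.keys (lower_op S a (p :: 'a::comm_ring_1 mpoly))"
  obtains m where "m \<in> Poly_Mapping.keys p" "deg_in S m = Suc (deg_in S m')"
  using assms(2)
proof (rule keys_lower_op)
  fix m i assume "m \<in> Poly_Mapping.keys p" "i \<in> S" "m = m' + var_exp i"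
  with assms(1) show thesis
    using that by (simp add: deg_in_add deg_in_var_exp)
qed

lemma lower_op_homog_in:
  assumes "finite S" "homog_in S (Suc k) (p :: 'a::comm_ring_1 mpoly)"
  shows "homog_in S k (lower_op S a p)"
  unfolding homog_in_def
proof
  fix m' assume "m' \<in> Poly_Mapping.keys (lower_op S a p)"
  with assms show "deg_in S m' = k"
    by (elim deg_in_keys_lower_op) (auto simp: homog_in_def)
qed

lemma lower_op_homog_in_0:
  assumes "finite S" "homog_in S 0 (p :: 'a::comm_ring_1 mpoly)"
  shows "lower_op S a p = 0"
proof -
  have "m' \<notin> Poly_Mapping.keys (lower_op S a p)" for m'
    using assms by (auto simp: homog_in_def elim: deg_in_keys_lower_op)
  then show ?thesis
    by (metis all_not_in_conv keys_eq_empty)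
qed

lemma polys_lower_op:
  assumes "p \<in> polys n"
  shows "lower_op S a p \<in> polys n"
  unfolding polys_def
proof (intro CollectI ballI)
  fix m' assume "m' \<in> Poly_Mapping.keys (lower_op S a p)"
  then obtain m i where "m \<in> Poly_Mapping.keys p" "m = m' + var_exp i"
    by (rule keys_lower_op)
  moreover from this have "Poly_Mapping.keys m' \<subseteq> Poly_Mapping.keys m"
    by (simp add: keys_add_nat)
  ultimately show "Poly_Mapping.keys m' \<subseteq> {..<n}"
    using assms by (auto simp: polys_def)
qed

lemma lower_op_mon_ideal:
  assumes "p \<in> mon_ideal n a"
  shows "lower_op S a p \<in> mon_ideal n a"
  unfolding mon_ideal_def
proof (intro CollectI ballI)
  fix m' assume "m' \<in> Poly_Mapping.keys (lower_op S a p)"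
  then obtain m i where m: "m \<in> Poly_Mapping.keys p" and i: "lower_coeff a m i \<noteq> (0::'a)"
    "m = m' + var_exp i"
    by (rule keys_lower_op)
  from assms m obtain j where j: "j < n" "a \<le> Poly_Mapping.lookup m j"
    by (auto simp: mon_ideal_def)
  show "\<exists>j<n. a \<le> Poly_Mapping.lookup m' j"
  proof (cases "j = i")
    case True
    have "Poly_Mapping.lookup m i \<noteq> a"
      using i(1) by (auto simp: lower_coeff_def)
    then have "a \<le> Poly_Mapping.lookup m' i"
      using i(2) j True by (simp add: lookup_add lookup_var_exp)
    then show ?thesis
      using j True by blast
  next
    case False
    then show ?thesis
      using i(2) j by (auto simp: lookup_add lookup_var_exp)
  qed
qed

lemma lower_mon_add_disjoint:
  assumes "Poly_Mapping.keys m1 \<inter> S = {}"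
  shows "lower_mon S a (m1 + m2) = Poly_Mapping.single m1 1 * (lower_mon S a m2 :: 'a::comm_ring_1 mpoly)"
proof -
  have "Poly_Mapping.single (m1 + m2 - var_exp i) (lower_coeff a (m1 + m2) i) =
        Poly_Mapping.single m1 1 * Poly_Mapping.single (m2 - var_exp i) (lower_coeff a m2 i :: 'a)"
    if "i \<in> S" for i
  proof -
    have z: "Poly_Mapping.lookup m1 i = 0"
      using assms that by (auto simp: in_keys_iff)
    have "lower_coeff a (m1 + m2) i = (lower_coeff a m2 i :: 'a)"
      by (simp add: lower_coeff_def lookup_add z)
    moreover have "m1 + m2 - var_exp i = m1 + (m2 - var_exp i)"
      by (rule poly_mapping_eqI) (auto simp: lookup_add lookup_minus lookup_var_exp z)
    ultimately show ?thesis
      by (simp add: mult_single)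
  qed
  then show ?thesis
    by (simp add: lower_mon_def sum_distrib_left)
qed

lemma lower_op_mult_disjoint:
  assumes "\<forall>m\<in>Poly_Mapping.keys q. Poly_Mapping.keys m \<inter> S = {}"
  shows "lower_op S a (q * p) = q * lower_op S a p"
proof (induction p rule: mpoly_induct)
  case (single m c)
  show ?case using assms
  proof (induction q rule: mpoly_induct_keys)
    case (single m' c')
    have "lower_op S a (Poly_Mapping.single m' c' * Poly_Mapping.single m c) =
          mpoly_smult (c' * c) (Poly_Mapping.single m' 1 * lower_mon S a m)"
      using single by (simp add: mult_single lower_op_single lower_mon_add_disjoint)
    also have "\<dots> = Poly_Mapping.single m' c' * mpoly_smult c (lower_mon S a m)"
      by (simp add: mult.assoc[symmetric] mult_single)
    finally show ?case
      by (simp add: lower_op_single)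
  qed (simp_all only: distrib_right lower_op_add lower_op_zero mult_zero_left)
qed (simp_all only: distrib_left lower_op_add lower_op_zero mult_zero_right)

text \<open>The commutator \<open>[lower_op S a, var_sum S]\<close> acts on forms of degree \<open>k\<close> in the
  variables of \<open>S\<close> as multiplication by \<open>sl2_weight S a k\<close>.  It comes from the following
  identity for the \<open>i\<close>-th term of \<open>lower_op S a (x_j x^m)\<close>.\<close>

lemma lower_term_var_exp_add:
  "Poly_Mapping.single (var_exp j + m - var_exp i) (lower_coeff a (var_exp j + m) i :: 'a::comm_ring_1) =
   Poly_Mapping.single (var_exp j + (m - var_exp i)) (lower_coeff a m i) +
   (if i = j then Poly_Mapping.single m (of_nat a - 1 - 2 * of_nat (Poly_Mapping.lookup m i)) else 0)"
proof (cases "i = j")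
  case False
  have coeff: "lower_coeff a (var_exp j + m) i = (lower_coeff a m i :: 'a)"
    using False by (simp add: lower_coeff_def lookup_add lookup_var_exp)
  show ?thesis
  proof (cases "Poly_Mapping.lookup m i = 0")
    case True
    then show ?thesis
      using False coeff by (simp add: lower_coeff_def)
  next
    case nz: False
    have "var_exp j + m - var_exp i = var_exp j + (m - var_exp i)"
      by (rule poly_mapping_eqI) (use nz False in \<open>auto simp: lookup_add lookup_minus lookup_var_exp\<close>)
    then show ?thesis
      using False coeff by simp
  qed
next
  case True
  have e1: "var_exp i + m - var_exp i = m"
    by (rule poly_mapping_eqI) (simp add: lookup_add lookup_minus lookup_var_exp)
  show ?thesis
  proof (cases "Poly_Mapping.lookup m i = 0")
    case z: True
    have "lower_coeff a (var_exp i + m) i = (of_nat a - 1 :: 'a)"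
      using z by (simp add: lower_coeff_def lookup_add lookup_var_exp)
    then show ?thesis
      using True e1 z by (simp add: lower_coeff_def)
  next
    case nz: False
    have e2: "var_exp i + (m - var_exp i) = m"
      by (rule poly_mapping_eqI) (use nz in \<open>auto simp: lookup_add lookup_minus lookup_var_exp\<close>)
    have l: "Poly_Mapping.lookup (var_exp i + m) i = Suc (Poly_Mapping.lookup m i)"
      by (simp add: lookup_add lookup_var_exp)
    have "lower_coeff a (var_exp i + m) i =
          (of_nat (Suc (Poly_Mapping.lookup m i)) * (of_nat a - of_nat (Suc (Poly_Mapping.lookup m i))) :: 'a)"
      by (simp only: lower_coeff_def l)
    also have "\<dots> = lower_coeff a m i + (of_nat a - 1 - 2 * of_nat (Poly_Mapping.lookup m i))"
      by (simp add: lower_coeff_def algebra_simps)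
    finally show ?thesis
      using True e1 e2 by (simp add: single_add)
  qed
qed

lemma single_sum: "Poly_Mapping.single m (\<Sum>j\<in>A. f j) = (\<Sum>j\<in>A. Poly_Mapping.single m (f j))"
  by (induction A rule: infinite_finite_induct) (auto simp: single_add)

definition sl2_weight :: "nat set \<Rightarrow> nat \<Rightarrow> nat \<Rightarrow> 'a::comm_ring_1" where
  "sl2_weight S a k = of_nat (card S) * (of_nat a - 1) - 2 * of_nat k"

lemma lower_op_var_sum_mult_single:
  assumes "finite S"
  shows "lower_op S a (var_sum S * Poly_Mapping.single m 1) =
         var_sum S * lower_mon S a m + Poly_Mapping.single m (sl2_weight S a (deg_in S m) :: 'a::comm_ring_1)"
proof -
  have L: "var_sum S * Poly_Mapping.single m (1::'a) = (\<Sum>j\<in>S. Poly_Mapping.single (var_exp j + m) 1)"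
    by (simp add: var_sum_def sum_distrib_right mvar_eq_single mult_single)
  have lhs: "lower_op S a (var_sum S * Poly_Mapping.single m (1::'a)) =
      (\<Sum>j\<in>S. \<Sum>i\<in>S. Poly_Mapping.single (var_exp j + m - var_exp i) (lower_coeff a (var_exp j + m) i))"
    unfolding L lower_op_sum by (simp add: lower_op_single lower_mon_def)
  have "var_sum S * lower_mon S a m =
      (\<Sum>i\<in>S. \<Sum>j\<in>S. Poly_Mapping.single (var_exp j + (m - var_exp i)) (lower_coeff a m i :: 'a))"
    by (simp add: var_sum_def lower_mon_def sum_distrib_right sum_distrib_left mvar_eq_single mult_single)
  also have "\<dots> = (\<Sum>j\<in>S. \<Sum>i\<in>S. Poly_Mapping.single (var_exp j + (m - var_exp i)) (lower_coeff a m i :: 'a))"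
    by (rule sum.swap)
  finally have rhs1: "var_sum S * lower_mon S a m =
      (\<Sum>j\<in>S. \<Sum>i\<in>S. Poly_Mapping.single (var_exp j + (m - var_exp i)) (lower_coeff a m i :: 'a))" .
  have diag: "(\<Sum>j\<in>S. \<Sum>i\<in>S. (if i = j then Poly_Mapping.single m
        (of_nat a - 1 - 2 * of_nat (Poly_Mapping.lookup m i)) else 0)) =
      (\<Sum>j\<in>S. Poly_Mapping.single m (of_nat a - 1 - 2 * of_nat (Poly_Mapping.lookup m j) :: 'a))"
    by (rule sum.cong) (auto simp: assms)
  have weight: "(\<Sum>j\<in>S. Poly_Mapping.single m (of_nat a - 1 - 2 * of_nat (Poly_Mapping.lookup m j) :: 'a)) =
      Poly_Mapping.single m (sl2_weight S a (deg_in S m))"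
    unfolding single_sum[symmetric]
    by (simp add: sl2_weight_def deg_in_def sum_subtractf sum_distrib_left assms)
  show ?thesis
    unfolding lhs rhs1 lower_term_var_exp_add sum.distrib diag weight ..
qed

lemma lower_op_var_sum_mult:
  assumes "finite S" "homog_in S k h"
  shows "lower_op S a (var_sum S * h) =
         var_sum S * lower_op S a h + mpoly_smult (sl2_weight S a k) (h :: 'a::comm_ring_1 mpoly)"
proof -
  have "\<forall>m\<in>Poly_Mapping.keys h. deg_in S m = k"
    using assms by (simp add: homog_in_def)
  then show ?thesis
  proof (induction h rule: mpoly_induct_keys)
    case (single m c)
    have s: "Poly_Mapping.single m c = mpoly_smult c (Poly_Mapping.single m (1::'a))"
      by (simp add: mult_single)
    have "lower_op S a (var_sum S * Poly_Mapping.single m c) =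
          mpoly_smult c (lower_op S a (var_sum S * Poly_Mapping.single m 1))"
      unfolding s by (simp add: lower_op_smult[symmetric] mult.left_commute)
    also have "\<dots> = mpoly_smult c (var_sum S * lower_mon S a m + Poly_Mapping.single m (sl2_weight S a k))"
      by (subst lower_op_var_sum_mult_single[OF assms(1)]) (simp add: single)
    also have "\<dots> = var_sum S * lower_op S a (Poly_Mapping.single m c) +
                   mpoly_smult (sl2_weight S a k) (Poly_Mapping.single m c)"
      by (simp add: lower_op_single distrib_left mult.left_commute mult_single mult.commute)
    finally show ?case .
  qed (simp_all add: lower_op_add distrib_left distrib_right)
qed

lemma lower_op_var_sum_pow_mult:
  assumes "finite S" "homog_in S k (h :: 'a::comm_ring_1 mpoly)"
  shows "lower_op S a (var_sum S ^ s * h) = var_sum S ^ s * lower_op S a h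
           + mpoly_smult (of_nat s * (sl2_weight S a k - of_nat s + 1)) (var_sum S ^ (s - 1) * h)"
proof (induction s)
  case (Suc s)
  let ?L = "var_sum S :: 'a mpoly"
  define c where "c = (of_nat s * (sl2_weight S a k - of_nat s + 1) :: 'a)"
  have hs: "homog_in S (k + s) (?L ^ s * h)"
    using homog_in_mult[OF homog_in_pow[OF homog_in_var_sum[OF assms(1) order_refl], of s] assms(2)]
    by (simp add: add.commute)
  have shift: "?L * mpoly_smult c (?L ^ (s - 1) * h) = mpoly_smult c (?L ^ s * h)"
    by (cases s) (simp_all add: c_def mult.left_commute)
  have coeff: "c + sl2_weight S a (k + s) = of_nat (Suc s) * (sl2_weight S a k - of_nat (Suc s) + 1)"
    by (simp add: c_def sl2_weight_def algebra_simps)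
  have "lower_op S a (?L ^ Suc s * h) = lower_op S a (?L * (?L ^ s * h))"
    by (simp add: mult.assoc)
  also have "\<dots> = ?L * lower_op S a (?L ^ s * h) + mpoly_smult (sl2_weight S a (k + s)) (?L ^ s * h)"
    by (rule lower_op_var_sum_mult[OF assms(1) hs])
  also have "\<dots> = ?L ^ Suc s * lower_op S a h +
      (mpoly_smult c (?L ^ s * h) + mpoly_smult (sl2_weight S a (k + s)) (?L ^ s * h))"
    using Suc.IH shift by (simp add: c_def distrib_left mult.assoc)
  also have "\<dots> = ?L ^ Suc s * lower_op S a h +
      mpoly_smult (of_nat (Suc s) * (sl2_weight S a k - of_nat (Suc s) + 1)) (?L ^ (Suc s - 1) * h)"
    by (simp only: mpoly_smult_add_left coeff diff_Suc_1)
  finally show ?case .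
qed simp

section \<open>Cancelling powers of a sum of variables\<close>

definition sl2_stable :: "nat set \<Rightarrow> nat \<Rightarrow> 'a::field mpoly set \<Rightarrow> bool" where
  "sl2_stable S a Q \<longleftrightarrow>
     mpoly.subspace Q \<and> (\<forall>p\<in>Q. var_sum S * p \<in> Q) \<and> (\<forall>p\<in>Q. lower_op S a p \<in> Q)"

lemma sl2_stable_var_sum_pow_mult:
  assumes "sl2_stable S a Q" "p \<in> Q"
  shows "var_sum S ^ j * p \<in> Q"
  using assms by (induction j) (auto simp: sl2_stable_def mult.assoc)

lemma sl2_stable_lower_op_mem:
  assumes Q: "sl2_stable S a Q" and "finite S" "homog_in S k h" "var_sum S ^ Suc s * h \<in> Q"
  shows "var_sum S ^ Suc (Suc s) * lower_op S a h \<in> Q"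
proof -
  let ?L = "var_sum S :: 'a::field mpoly"
  define c where "c = (of_nat (Suc s) * (sl2_weight S a k - of_nat (Suc s) + 1) :: 'a)"
  have "?L * lower_op S a (?L ^ Suc s * h) = ?L ^ Suc (Suc s) * lower_op S a h + mpoly_smult c (?L ^ Suc s * h)"
    using lower_op_var_sum_pow_mult[OF assms(2,3), of a "Suc s"]
    by (simp add: c_def distrib_left mult.left_commute mult.assoc)
  then have "?L ^ Suc (Suc s) * lower_op S a h =
      ?L * lower_op S a (?L ^ Suc s * h) - mpoly_smult c (?L ^ Suc s * h)"
    by (simp add: algebra_simps)
  also have "\<dots> \<in> Q"
    using Q assms(4) by (auto simp: sl2_stable_def intro!: mpoly.subspace_diff mpoly.subspace_scale)
  finally show ?thesis .
qed

lemma sl2_stable_cancel_step: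
  fixes Q :: "'a::field_char_0 mpoly set"
  assumes Q: "sl2_stable S a Q" and "finite S" "1 \<le> a" "homog_in S k h"
    and bound: "Suc s + 2 * k \<le> card S * (a - 1)"
    and "var_sum S ^ Suc s * h \<in> Q" "lower_op S a h \<in> Q"
  shows "var_sum S ^ s * h \<in> Q"
proof -
  let ?L = "var_sum S :: 'a mpoly"
  define c where "c = (of_nat (Suc s) * (sl2_weight S a k - of_nat (Suc s) + 1) :: 'a)"
  have "mpoly_smult c (?L ^ s * h) = lower_op S a (?L ^ Suc s * h) - ?L ^ Suc s * lower_op S a h"
    using lower_op_var_sum_pow_mult[OF assms(2,4), of a "Suc s"] by (simp add: c_def)
  also have "\<dots> \<in> Q"
    using Q assms(6) sl2_stable_var_sum_pow_mult[OF Q assms(7)]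
    unfolding sl2_stable_def by (blast intro: mpoly.subspace_diff)
  finally have cQ: "mpoly_smult c (?L ^ s * h) \<in> Q" .
  have T: "of_nat (card S * (a - 1)) = (of_nat (card S) * (of_nat a - 1) :: 'a)"
    using assms(3) by (simp add: of_nat_diff)
  have "sl2_weight S a k - of_nat (Suc s) + 1 = (of_nat (card S * (a - 1) - 2 * k - s) :: 'a)"
    using bound by (simp add: sl2_weight_def T[symmetric] of_nat_diff algebra_simps)
  then have "c = of_nat (Suc s * (card S * (a - 1) - 2 * k - s))"
    unfolding c_def of_nat_mult by simp
  moreover have "Suc s * (card S * (a - 1) - 2 * k - s) \<noteq> 0"
    using bound by simp
  ultimately have "c \<noteq> 0"
    by (metis of_nat_eq_0_iff)
  then have "?L ^ s * h = mpoly_smult (inverse c) (mpoly_smult c (?L ^ s * h))"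
    by (simp add: mpoly_smult_smult)
  also have "\<dots> \<in> Q"
    using Q cQ unfolding sl2_stable_def by (blast intro: mpoly.subspace_scale)
  finally show ?thesis .
qed

lemma sl2_stable_cancel_var_sum_pow:
  fixes Q :: "'a::field_char_0 mpoly set"
  assumes Q: "sl2_stable S a Q" and "finite S" "1 \<le> a"
  shows "homog_in S k h \<Longrightarrow> s + 2 * k \<le> card S * (a - 1) \<Longrightarrow> var_sum S ^ s * h \<in> Q \<Longrightarrow> h \<in> Q"
proof (induction k arbitrary: h s rule: less_induct)
  case (less k h s)
  from less.prems show ?case
  proof (induction s)
    case (Suc s)
    note prems = Suc.prems
    have "lower_op S a h \<in> Q"
    proof (cases k)
      case 0
      then have "lower_op S a h = 0"
        using lower_op_homog_in_0[OF assms(2)] prems(1) by simp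
      then show ?thesis
        using Q by (simp add: sl2_stable_def mpoly.subspace_0)
    next
      case (Suc k')
      have "homog_in S k' (lower_op S a h)"
        using lower_op_homog_in[OF assms(2)] prems(1) Suc by simp
      moreover have "var_sum S ^ Suc (Suc s) * lower_op S a h \<in> Q"
        by (rule sl2_stable_lower_op_mem[OF Q assms(2) prems(1,3)])
      moreover have "Suc (Suc s) + 2 * k' \<le> card S * (a - 1)"
        using prems(2) Suc by simp
      ultimately show ?thesis
        using less.IH[of k'] Suc by blast
    qed
    then have "var_sum S ^ s * h \<in> Q"
      using sl2_stable_cancel_step[OF Q assms(2,3)] prems by blast
    then show ?case
      using Suc.IH prems by simp
  qed simp
qed

lemma sl2_stable_cancel_var_sum_pow_graded:
  fixes Q :: "'a::field_char_0 mpoly set"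
  assumes Q: "sl2_stable S a Q" and "finite S" "1 \<le> a"
    and parts: "\<And>t p. p \<in> Q \<Longrightarrow> deg_part S t p \<in> Q"
    and deg: "\<forall>m\<in>Poly_Mapping.keys h. deg_in S m \<le> K"
    and bound: "s + 2 * K \<le> card S * (a - 1)"
    and mem: "var_sum S ^ s * h \<in> Q"
  shows "h \<in> Q"
proof -
  have "deg_part S t h \<in> Q" if "t \<le> K" for t
  proof -
    have "homog_in S s (var_sum S ^ s :: 'a mpoly)"
      using homog_in_pow[OF homog_in_var_sum[OF assms(2) order_refl], of s] by simp
    then have "var_sum S ^ s * deg_part S t h = deg_part S (t + s) (var_sum S ^ s * h)"
      using deg_part_mult_homog_in[of S s "var_sum S ^ s" "t + s" h] by simp
    also have "\<dots> \<in> Q"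
      using parts mem by blast
    finally have "var_sum S ^ s * deg_part S t h \<in> Q" .
    moreover have "s + 2 * t \<le> card S * (a - 1)"
      using bound that by simp
    ultimately show ?thesis
      using sl2_stable_cancel_var_sum_pow[OF Q assms(2,3) homog_in_deg_part] by blast
  qed
  then have "(\<Sum>t\<le>K. deg_part S t h) \<in> Q"
    using Q by (auto simp: sl2_stable_def intro: mpoly.subspace_sum)
  then show ?thesis
    using mpoly_eq_sum_deg_parts[OF deg] by simp
qed

section \<open>Injectivity of multiplication by \<open>x_0 + \<dots> + x_(N-1)\<close>\<close>

lemma sl2_stable_mon_ideal: "sl2_stable S a (mon_ideal n a :: 'a::field mpoly set)"
  unfolding sl2_stable_def by (simp add: mpoly_subspace_mon_ideal mon_ideal_mult lower_op_mon_ideal)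

lemma mon_ideal_cancel_var_sum:
  fixes h :: "'a::field_char_0 mpoly"
  assumes "1 \<le> a" "\<forall>m\<in>Poly_Mapping.keys h. deg_in S m \<le> K" "1 + 2 * K \<le> card S * (a - 1)"
    and "finite S" "var_sum S * h \<in> mon_ideal n a"
  shows "h \<in> mon_ideal n a"
  by (rule sl2_stable_cancel_var_sum_pow_graded[OF sl2_stable_mon_ideal, where s = 1])
    (use assms in \<open>simp_all add: mon_ideal_deg_part\<close>)

text \<open>The ideal \<open>J + (x_0 + \<dots> + x_(N-1))\<close>, modulo which \<open>(x_0 + \<dots> + x_(n-1))^a\<close> becomes
  \<open>(x_N + \<dots> + x_(n-1))^a\<close>.\<close>

definition mon_ideal_plus_var_sum :: "nat \<Rightarrow> nat \<Rightarrow> nat \<Rightarrow> 'a::comm_ring_1 mpoly set" where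
  "mon_ideal_plus_var_sum N n a =
     {var_sum {..<N} * u + j | u j. u \<in> polys n \<and> j \<in> mon_ideal n a}"

lemma mon_ideal_plus_var_sumI:
  "u \<in> polys n \<Longrightarrow> j \<in> mon_ideal n a \<Longrightarrow> var_sum {..<N} * u + j \<in> mon_ideal_plus_var_sum N n a"
  unfolding mon_ideal_plus_var_sum_def by blast

lemma mon_ideal_plus_var_sumE:
  assumes "p \<in> mon_ideal_plus_var_sum N n a"
  obtains u j where "u \<in> polys n" "j \<in> mon_ideal n a" "p = var_sum {..<N} * u + j"
  using assms unfolding mon_ideal_plus_var_sum_def by blast

lemma keys_var_sum_lessThan_disjoint:
  "m \<in> Poly_Mapping.keys (var_sum {..<N} :: 'a::comm_ring_1 mpoly) \<Longrightarrow> Poly_Mapping.keys m \<inter> {N..<n} = {}"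
  by (auto simp: keys_var_exp dest!: keys_var_sum)

lemma sl2_stable_mon_ideal_plus_var_sum:
  "sl2_stable {N..<n} a (mon_ideal_plus_var_sum N n a :: 'a::field mpoly set)"
proof -
  let ?L1 = "var_sum {..<N} :: 'a mpoly" and ?L2 = "var_sum {N..<n} :: 'a mpoly"
  let ?Q = "mon_ideal_plus_var_sum N n a :: 'a mpoly set"
  have zero: "0 \<in> ?Q"
    using mon_ideal_plus_var_sumI[of 0 n "0::'a mpoly" a N] by simp
  have add: "p + q \<in> ?Q" if hyps: "p \<in> ?Q" "q \<in> ?Q" for p q
  proof -
    obtain u j where "u \<in> polys n" "j \<in> mon_ideal n a" "p = ?L1 * u + j"
      using hyps(1) by (rule mon_ideal_plus_var_sumE)
    moreover obtain u' j' where "u' \<in> polys n" "j' \<in> mon_ideal n a" "q = ?L1 * u' + j'"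
      using hyps(2) by (rule mon_ideal_plus_var_sumE)
    ultimately have "p + q = ?L1 * (u + u') + (j + j')"
      by (simp add: algebra_simps)
    also have "\<dots> \<in> ?Q"
      using \<open>u \<in> polys n\<close> \<open>u' \<in> polys n\<close> \<open>j \<in> mon_ideal n a\<close> \<open>j' \<in> mon_ideal n a\<close>
      by (intro mon_ideal_plus_var_sumI polys_add mon_ideal_add)
    finally show ?thesis .
  qed
  have closed: "mpoly_smult c p \<in> ?Q" "?L2 * p \<in> ?Q" "lower_op {N..<n} a p \<in> ?Q"
    if hyp: "p \<in> ?Q" for p c
  proof -
    obtain u j where uj: "u \<in> polys n" "j \<in> mon_ideal n a" "p = ?L1 * u + j"
      using hyp by (rule mon_ideal_plus_var_sumE)
    have "mpoly_smult c p = ?L1 * mpoly_smult c u + mpoly_smult c j"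
      using uj(3) by (simp add: algebra_simps)
    also have "\<dots> \<in> ?Q"
      using uj(1,2) by (intro mon_ideal_plus_var_sumI polys_smult mon_ideal_mult)
    finally show "mpoly_smult c p \<in> ?Q" .
    have "?L2 * p = ?L1 * (?L2 * u) + ?L2 * j"
      using uj(3) by (simp add: algebra_simps)
    also have "\<dots> \<in> ?Q"
      using uj(1,2) by (intro mon_ideal_plus_var_sumI polys_mult polys_var_sum mon_ideal_mult) auto
    finally show "?L2 * p \<in> ?Q" .
    have "lower_op {N..<n} a p = ?L1 * lower_op {N..<n} a u + lower_op {N..<n} a j"
      unfolding uj(3) lower_op_add
      by (subst lower_op_mult_disjoint) (auto dest: keys_var_sum_lessThan_disjoint)
    also have "\<dots> \<in> ?Q"
      using uj(1,2) by (intro mon_ideal_plus_var_sumI polys_lower_op lower_op_mon_ideal)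
    finally show "lower_op {N..<n} a p \<in> ?Q" .
  qed
  show ?thesis
    unfolding sl2_stable_def mpoly.subspace_def using zero add closed by simp
qed

lemma deg_part_mon_ideal_plus_var_sum:
  assumes "p \<in> mon_ideal_plus_var_sum N n a"
  shows "deg_part {N..<n} t p \<in> mon_ideal_plus_var_sum N n a"
proof -
  obtain u j where uj: "u \<in> polys n" "j \<in> mon_ideal n a" "p = var_sum {..<N} * u + j"
    using assms by (rule mon_ideal_plus_var_sumE)
  have "homog_in {N..<n} 0 (var_sum {..<N} :: 'a mpoly)"
    by (rule homog_in_var_sum_disjoint) auto
  then have "deg_part {N..<n} t (var_sum {..<N} * u) = var_sum {..<N} * deg_part {N..<n} t u"
    using deg_part_mult_homog_in[of "{N..<n}" 0 "var_sum {..<N}" t u] by simp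
  then have "deg_part {N..<n} t p = var_sum {..<N} * deg_part {N..<n} t u + deg_part {N..<n} t j"
    unfolding uj(3) deg_part_add by simp
  also have "\<dots> \<in> mon_ideal_plus_var_sum N n a"
    using uj(1,2) by (intro mon_ideal_plus_var_sumI polys_deg_part mon_ideal_deg_part)
  finally show ?thesis .
qed

lemma mon_ideal_plus_var_sum_cancel_var_sum_pow:
  fixes g :: "'a::field_char_0 mpoly"
  assumes "1 \<le> a" "\<forall>m\<in>Poly_Mapping.keys g. deg_in {N..<n} m \<le> K" "a + 2 * K \<le> (n - N) * (a - 1)"
    and "var_sum {N..<n} ^ a * g \<in> mon_ideal_plus_var_sum N n a"
  shows "g \<in> mon_ideal_plus_var_sum N n a"
  by (rule sl2_stable_cancel_var_sum_pow_graded[OF sl2_stable_mon_ideal_plus_var_sum])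
    (use assms in \<open>simp_all add: deg_part_mon_ideal_plus_var_sum\<close>)

lemma I_na_homog_elim:
  assumes "p \<in> I_na n a" "homog_in {..<n} d p" "a \<le> d"
  obtains j g where "j \<in> mon_ideal n a" "g \<in> polys n" "homog_in {..<n} (d - a) g"
    "p = j + var_sum {..<n} ^ a * g"
proof -
  let ?L = "var_sum {..<n} :: 'a mpoly"
  obtain j u where ju: "j \<in> mon_ideal n a" "u \<in> polys n" "p = j + u * ?L ^ a"
    using assms(1) by (rule I_na_elim)
  have "homog_in {..<n} a (?L ^ a)"
    using homog_in_pow[OF homog_in_var_sum[of "{..<n}" "{..<n}"], of a] by simp
  then have "deg_part {..<n} d (?L ^ a * u) = ?L ^ a * deg_part {..<n} (d - a) u"
    using deg_part_mult_homog_in[of "{..<n}" a "?L ^ a" d u] assms(3) by simp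
  then have "p = deg_part {..<n} d j + ?L ^ a * deg_part {..<n} (d - a) u"
    using deg_part_homog_in[OF assms(2)] ju(3) by (simp add: deg_part_add mult.commute)
  then show ?thesis
    using that[of "deg_part {..<n} d j" "deg_part {..<n} (d - a) u"] ju(1,2)
    by (simp add: mon_ideal_deg_part polys_deg_part homog_in_deg_part)
qed

lemma var_sum_pow_split:
  assumes "N \<le> n"
  obtains R where "R \<in> polys n"
    "var_sum {..<n} ^ a = var_sum {N..<n} ^ a + var_sum {..<N} * (R :: 'a::comm_ring_1 mpoly)"
proof
  let ?L = "var_sum {..<n} :: 'a mpoly" and ?L1 = "var_sum {..<N} :: 'a mpoly"
    and ?L2 = "var_sum {N..<n} :: 'a mpoly"
  let ?R = "\<Sum>i<a. ?L2 ^ (a - Suc i) * ?L ^ i"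
  show "?R \<in> polys n"
    by (intro polys_sum polys_mult polys_pow polys_var_sum) auto
  have "?L ^ a - ?L2 ^ a = (?L - ?L2) * ?R"
    by (rule power_diff_sumr2)
  also have "?L - ?L2 = ?L1"
    by (simp add: var_sum_split[OF assms])
  finally show "?L ^ a = ?L2 ^ a + ?L1 * ?R"
    by (simp add: algebra_simps)
qed

lemma deg_part_var_sum_pow_mult_I_na:
  assumes "u \<in> polys n"
  shows "deg_part {..<n} t (var_sum {..<n} ^ a * u) \<in> I_na n a"
proof -
  have L: "homog_in {..<n} a (var_sum {..<n} ^ a :: 'a::comm_ring_1 mpoly)"
    using homog_in_pow[OF homog_in_var_sum[of "{..<n}" "{..<n}"], of a] by simp
  show ?thesis
  proof (cases "a \<le> t")
    case True
    then show ?thesis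
      using deg_part_mult_homog_in[OF L, of t u]
        I_na_var_sum_pow[OF polys_deg_part[OF assms], of "{..<n}" "t - a" a]
      by (simp add: mult.commute)
  next
    case False
    then show ?thesis
      using deg_part_mult_homog_in[OF L, of t u] by simp
  qed
qed

lemma I_na_if_var_sum_mult_mon_ideal:
  fixes f :: "'a::field_char_0 mpoly"
  assumes "N \<le> n" "1 \<le> a" "1 \<le> d" "2 * d \<le> N * (a - 1)" "f \<in> homog n (d - 1)" "u \<in> polys n"
    and mem: "var_sum {..<N} * (f - var_sum {..<n} ^ a * u) \<in> mon_ideal n a"
  shows "f \<in> I_na n a"
proof -
  let ?L = "var_sum {..<n} :: 'a mpoly" and ?L1 = "var_sum {..<N} :: 'a mpoly"
  define h where "h = deg_part {..<n} (d - 1) (f - ?L ^ a * u)"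
  have f: "f \<in> polys n" "homog_in {..<n} (d - 1) f"
    using assms(5) by (simp_all add: homog_iff_homog_in)
  have "homog_in {..<n} 1 ?L1"
    using assms(1) by (intro homog_in_var_sum) auto
  then have "?L1 * h = deg_part {..<n} d (?L1 * (f - ?L ^ a * u))"
    using deg_part_mult_homog_in[of "{..<n}" 1 ?L1 d] assms(3) by (simp add: h_def)
  then have "?L1 * h \<in> mon_ideal n a"
    using mem by (simp add: mon_ideal_deg_part)
  moreover have "deg_in {..<N} m \<le> d - 1" if "m \<in> Poly_Mapping.keys h" for m
  proof -
    have "deg_in {..<n} m = d - 1"
      using homog_in_deg_part that unfolding h_def homog_in_def by blast
    moreover have "deg_in {..<N} m \<le> deg_in {..<n} m"
      using assms(1) by (intro deg_in_mono) auto
    ultimately show ?thesis by simp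
  qed
  ultimately have hJ: "h \<in> mon_ideal n a"
    using mon_ideal_cancel_var_sum[of a h "{..<N}" "d - 1"] assms(2-4) by simp
  have "h \<in> polys n"
    unfolding h_def using f(1) assms(6)
    by (intro polys_deg_part polys_diff polys_mult polys_pow polys_var_sum) auto
  with hJ have "h \<in> I_na n a"
    by (rule mon_ideal_subset_I_na)
  moreover have "deg_part {..<n} (d - 1) (?L ^ a * u) \<in> I_na n a"
    using assms(6) by (rule deg_part_var_sum_pow_mult_I_na)
  moreover have "f = h + deg_part {..<n} (d - 1) (?L ^ a * u)"
    using deg_part_homog_in[OF f(2)] by (simp add: h_def deg_part_diff)
  ultimately show ?thesis
    by (simp add: I_na_add)
qed

lemma var_sum_mult_injective:
  fixes f :: "'a::field_char_0 mpoly"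
  assumes "N \<le> n" "1 \<le> a" "a \<le> d" "2 * d \<le> N * (a - 1)" "2 * d - 1 \<le> (n - N) * (a - 1)"
    and f: "f \<in> homog n (d - 1)" and mem: "var_sum {..<N} * f \<in> I_na n a"
  shows "f \<in> I_na n a"
proof -
  let ?L = "var_sum {..<n} :: 'a mpoly" and ?L1 = "var_sum {..<N} :: 'a mpoly"
    and ?L2 = "var_sum {N..<n} :: 'a mpoly"
  have "homog_in {..<n} d (?L1 * f)"
    using homog_in_mult[OF homog_in_var_sum[of "{..<n}" "{..<N}"], of "d - 1" f] f assms(1-3)
    by (simp add: homog_iff_homog_in)
  from mem this assms(3) obtain j g where jg: "j \<in> mon_ideal n a" "g \<in> polys n"
    "homog_in {..<n} (d - a) g" and eq: "?L1 * f = j + ?L ^ a * g"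
    by (rule I_na_homog_elim)
  obtain R where R: "R \<in> polys n" "?L ^ a = ?L2 ^ a + ?L1 * R"
    using var_sum_pow_split[OF assms(1)] by blast
  have "?L2 ^ a * g = ?L1 * (f - R * g) + (- j)"
    using eq R(2) by (simp add: algebra_simps)
  moreover have "?L1 * (f - R * g) + (- j) \<in> mon_ideal_plus_var_sum N n a"
    using f jg R(1) by (intro mon_ideal_plus_var_sumI polys_diff polys_mult mon_ideal_uminus)
      (simp_all add: homog_iff_homog_in)
  ultimately have "?L2 ^ a * g \<in> mon_ideal_plus_var_sum N n a"
    by (simp only:)
  moreover have "deg_in {N..<n} m \<le> d - a" if "m \<in> Poly_Mapping.keys g" for m
  proof -
    have "deg_in {N..<n} m \<le> deg_in {..<n} m"
      by (intro deg_in_mono) auto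
    with jg(3) that show ?thesis
      by (simp add: homog_in_def)
  qed
  ultimately have "g \<in> mon_ideal_plus_var_sum N n a"
    using mon_ideal_plus_var_sum_cancel_var_sum_pow[of a g N n "d - a"] assms(2,3,5) by simp
  then obtain u j' where u: "u \<in> polys n" "j' \<in> mon_ideal n a" "g = ?L1 * u + j'"
    by (rule mon_ideal_plus_var_sumE)
  have "?L1 * (f - ?L ^ a * u) = j + ?L ^ a * j'"
    using eq u(3) by (simp add: algebra_simps)
  then have "?L1 * (f - ?L ^ a * u) \<in> mon_ideal n a"
    using jg(1) u(2) by (simp add: mon_ideal_add mon_ideal_mult)
  then show ?thesis
    using I_na_if_var_sum_mult_mon_ideal[OF assms(1,2) _ assms(4) f u(1)] assms(2,3) by simp
qed

section \<open>Injectivity modulo a subspace is an open condition\<close>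

lemma sum_distinct_set_conv_nth:
  "distinct xs \<Longrightarrow> (\<Sum>x\<in>set xs. F x) = (\<Sum>j<length xs. F (xs ! j))"
  by (simp add: sum.distinct_set_conv_list sum_list_sum_nth atLeast0LessThan)

context vector_space
begin

lemma independent_Un_if_span_Int:
  assumes "independent S" "independent T" "span S \<inter> span T \<subseteq> {0}"
  shows "independent (S \<union> T)"
  unfolding independent_explicit_module
proof (intro allI impI)
  fix t u v
  assume t: "finite t" "t \<subseteq> S \<union> T" and sum0: "(\<Sum>v\<in>t. scale (u v) v) = 0" and v: "v \<in> t"
  let ?x = "\<Sum>w\<in>t \<inter> S. scale (u w) w" and ?y = "\<Sum>w\<in>t - S. scale (u w) w"
  have "?x + ?y = 0"
    using sum0 sum.Int_Diff[OF t(1), of "\<lambda>w. scale (u w) w" S] by simp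
  then have "?x = - ?y"
    by (simp add: eq_neg_iff_add_eq_0)
  moreover have "?y \<in> span T"
    by (rule span_sum, rule span_scale, rule span_base) (use t(2) in auto)
  ultimately have "?x \<in> span T"
    by (simp add: span_neg)
  moreover have "?x \<in> span S"
    by (rule span_sum, rule span_scale, rule span_base) simp
  ultimately have "?x = 0"
    using assms(3) by blast
  with \<open>?x + ?y = 0\<close> have "?y = 0"
    by simp
  show "u v = 0"
  proof (cases "v \<in> S")
    case True
    with t(1) v show ?thesis
      using independentD[OF assms(1) _ _ \<open>?x = 0\<close>] by blast
  next
    case False
    with t v show ?thesis
      using independentD[OF assms(2) _ _ \<open>?y = 0\<close>] by blast
  qed
qed

lemma span_Int_span_if_independent_Un:
  assumes "finite S" "finite T" "independent (S \<union> T)" "S \<inter> T = {}"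
  shows "span S \<inter> span T \<subseteq> {0}"
proof
  fix x assume x: "x \<in> span S \<inter> span T"
  then have "x \<in> range (\<lambda>u. \<Sum>v\<in>S. scale (u v) v)" "x \<in> range (\<lambda>u. \<Sum>v\<in>T. scale (u v) v)"
    using span_finite[OF assms(1)] span_finite[OF assms(2)] by auto
  then obtain a b where a: "x = (\<Sum>v\<in>S. scale (a v) v)" and b: "x = (\<Sum>v\<in>T. scale (b v) v)"
    by blast
  let ?u = "\<lambda>v. if v \<in> S then a v else - b v"
  have "(\<Sum>v\<in>S \<union> T. scale (?u v) v) = (\<Sum>v\<in>S. scale (?u v) v) + (\<Sum>v\<in>T. scale (?u v) v)"
    by (rule sum.union_disjoint) (use assms in auto)
  also have "(\<Sum>v\<in>S. scale (?u v) v) = x"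
    unfolding a by (rule sum.cong) auto
  also have "(\<Sum>v\<in>T. scale (?u v) v) = - x"
    unfolding b sum_negf[symmetric] using assms(4) by (intro sum.cong) auto
  finally have "(\<Sum>v\<in>S \<union> T. scale (?u v) v) = 0"
    by simp
  then have "a v = 0" if "v \<in> S" for v
    using independentD[OF assms(3), of "S \<union> T" ?u v] assms(1,2) that by simp
  then show "x \<in> {0}"
    using a by simp
qed

lemma exists_complement_basis:
  assumes "subspace V" "subspace I" "finite B" "V \<subseteq> span B"
  obtains X where "finite X" "X \<subseteq> V" "independent X" "span X \<inter> I \<subseteq> {0}"
    "\<forall>f\<in>V. \<exists>y\<in>span X. f - y \<in> I"
proof -
  obtain BI where BI: "BI \<subseteq> V \<inter> I" "independent BI" "V \<inter> I \<subseteq> span BI"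
    by (rule maximal_independent_subset)
  from BI(1) have "BI \<subseteq> V"
    by blast
  then obtain C where C: "BI \<subseteq> C" "C \<subseteq> V" "independent C" "V \<subseteq> span C"
    using BI(2) by (rule maximal_independent_subset_extend)
  from C(2) assms(4) have "C \<subseteq> span B"
    by blast
  then have "finite C"
    using independent_span_bound[OF assms(3) C(3)] by blast
  define X where "X = C - BI"
  have XBI: "X \<union> BI = C" "X \<inter> BI = {}"
    using C(1) by (auto simp: X_def)
  have X: "finite X" "X \<subseteq> V" "independent X"
    using \<open>finite C\<close> C(2) independent_mono[OF C(3), of X] by (auto simp: X_def)
  have "span X \<inter> I \<subseteq> span X \<inter> span BI"
    using span_minimal[OF X(2) assms(1)] BI(3) by blast
  also have "\<dots> \<subseteq> {0}"
  proof (rule span_Int_span_if_independent_Un)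
    show "finite BI"
      using C(1) \<open>finite C\<close> by (rule finite_subset)
  qed (use X(1) XBI C(3) in simp_all)
  finally have int: "span X \<inter> I \<subseteq> {0}" .
  have approx: "\<forall>f\<in>V. \<exists>y\<in>span X. f - y \<in> I"
  proof
    fix f assume "f \<in> V"
    have "f \<in> span (X \<union> BI)"
      using \<open>f \<in> V\<close> C(4) XBI(1) by blast
    then obtain y z where "f = y + z" "y \<in> span X" "z \<in> span BI"
      unfolding span_Un by blast
    moreover have "span BI \<subseteq> I"
      using BI(1) assms(2) span_minimal by blast
    ultimately have "y \<in> span X" "f - y \<in> I"
      by auto
    then show "\<exists>y\<in>span X. f - y \<in> I"
      by blast
  qed
  from X int approx show ?thesis
    by (rule that)
qed

lemma exists_dual_functional:
  assumes "independent Y" "subspace K" "span Y \<inter> K \<subseteq> {0}" "y \<in> Y"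
  obtains \<phi> where "Vector_Spaces.linear scale (*) \<phi>"
    "\<forall>y'\<in>Y. \<phi> y' = (if y' = y then 1 else 0)" "\<forall>k\<in>K. \<phi> k = 0"
proof -
  interpret dual: vector_space_pair scale "(*) :: 'a \<Rightarrow> 'a \<Rightarrow> 'a"
    by unfold_locales (simp_all add: algebra_simps)
  obtain B where B: "B \<subseteq> K" "independent B" "K \<subseteq> span B"
    by (rule maximal_independent_subset)
  have "span B \<subseteq> K"
    using B(1) assms(2) by (rule span_minimal)
  then have indep: "independent (Y \<union> B)"
    using assms(3) by (intro independent_Un_if_span_Int[OF assms(1) B(2)]) blast
  have "y \<notin> B"
  proof
    assume "y \<in> B"
    then have "y = 0"
      using assms(3,4) B(1) span_base by blast
    with assms(1,4) show False
      using dependent_zero by blast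
  qed
  obtain \<phi> where \<phi>: "Vector_Spaces.linear scale (*) \<phi>"
    "\<forall>x\<in>Y \<union> B. \<phi> x = (if x = y then 1 else 0)"
    using dual.linear_independent_extend[OF indep, of "\<lambda>x. if x = y then 1 else 0"] by blast
  have "\<phi> b = 0" if "b \<in> B" for b
    using \<phi>(2) \<open>y \<notin> B\<close> that by auto
  then have "\<phi> k = 0" if "k \<in> K" for k
  proof -
    have "k \<in> span B"
      using B(3) that by blast
    with \<open>\<And>b. b \<in> B \<Longrightarrow> \<phi> b = 0\<close> show ?thesis
      by (rule dual.linear_eq_0_on_span[OF \<phi>(1)])
  qed
  with \<phi> show ?thesis
    using that by auto
qed

lemma linear_image_independent_modulo:
  assumes A: "Vector_Spaces.linear scale scale A" and "subspace I" "independent X"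
    and kernel: "\<And>v. v \<in> span X \<Longrightarrow> A v \<in> I \<Longrightarrow> v = 0"
  shows "inj_on A (span X)" "independent (A ` X)" "span (A ` X) \<inter> I \<subseteq> {0}"
proof -
  interpret A: Vector_Spaces.linear scale scale A
    by (fact A)
  show inj: "inj_on A (span X)"
  proof (rule inj_onI)
    fix v w assume vw: "v \<in> span X" "w \<in> span X" "A v = A w"
    have "A (v - w) \<in> I"
      using vw(3) subspace_0[OF assms(2)] by (simp only: A.diff diff_self)
    moreover have "v - w \<in> span X"
      using vw(1,2) by (rule span_diff)
    ultimately show "v = w"
      using kernel by force
  qed
  show "independent (A ` X)"
    using A.independent_injective_image[OF assms(3) inj] .
  show "span (A ` X) \<inter> I \<subseteq> {0}"
  proof
    fix w assume "w \<in> span (A ` X) \<inter> I"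
    then obtain v where "v \<in> span X" "A v \<in> I" "w = A v"
      by (auto simp: A.span_image)
    moreover have "v = 0"
      using \<open>v \<in> span X\<close> \<open>A v \<in> I\<close> by (rule kernel)
    ultimately show "w \<in> {0}"
      by (simp add: A.zero)
  qed
qed

lemma exists_dual_family:
  assumes A: "Vector_Spaces.linear scale scale A" and "subspace I" "independent (set xs)" "distinct xs"
    and kernel: "\<And>v. v \<in> span (set xs) \<Longrightarrow> A v \<in> I \<Longrightarrow> v = 0"
  obtains \<Phi> where "\<forall>i<length xs. Vector_Spaces.linear scale (*) (\<Phi> i) \<and> (\<forall>z\<in>I. \<Phi> i z = 0)"
    "\<forall>i<length xs. \<forall>j<length xs. \<Phi> i (A (xs ! j)) = (if i = j then 1 else 0)"
proof -
  let ?r = "length xs" and ?X = "set xs"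
  note image = linear_image_independent_modulo[OF A assms(2,3) kernel]
  have "\<forall>i\<in>{..<?r}. \<exists>\<phi>. (Vector_Spaces.linear scale (*) \<phi> \<and> (\<forall>z\<in>I. \<phi> z = 0)) \<and>
      (\<forall>j<?r. \<phi> (A (xs ! j)) = (if i = j then 1 else 0))"
  proof
    fix i assume i: "i \<in> {..<?r}"
    then have "A (xs ! i) \<in> A ` ?X"
      by auto
    with image(2) assms(2) image(3) obtain \<phi> where \<phi>: "Vector_Spaces.linear scale (*) \<phi>"
      "\<forall>y'\<in>A ` ?X. \<phi> y' = (if y' = A (xs ! i) then 1 else 0)" "\<forall>z\<in>I. \<phi> z = 0"
      by (rule exists_dual_functional)
    have "\<phi> (A (xs ! j)) = (if i = j then 1 else 0)" if j: "j < ?r" for j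
    proof -
      have "xs ! i \<in> span ?X" "xs ! j \<in> span ?X"
        using i j by (auto intro: span_base)
      then have "A (xs ! j) = A (xs ! i) \<longleftrightarrow> xs ! j = xs ! i"
        using image(1) by (auto dest: inj_onD)
      also have "\<dots> \<longleftrightarrow> i = j"
        using assms(4) i j by (auto simp: nth_eq_iff_index_eq)
      finally have eq_iff: "A (xs ! j) = A (xs ! i) \<longleftrightarrow> i = j" .
      have "A (xs ! j) \<in> A ` ?X"
        using j by auto
      with \<phi>(2) show ?thesis
        unfolding eq_iff[symmetric] by blast
    qed
    with \<phi>(1,3) show "\<exists>\<phi>. (Vector_Spaces.linear scale (*) \<phi> \<and> (\<forall>z\<in>I. \<phi> z = 0)) \<and>
        (\<forall>j<?r. \<phi> (A (xs ! j)) = (if i = j then 1 else 0))"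
      by blast
  qed
  then obtain \<Phi> where "\<forall>i\<in>{..<?r}. (Vector_Spaces.linear scale (*) (\<Phi> i) \<and> (\<forall>z\<in>I. \<Phi> i z = 0)) \<and>
      (\<forall>j<?r. \<Phi> i (A (xs ! j)) = (if i = j then 1 else 0))"
    by (rule bchoice[THEN exE])
  then have "\<forall>i<?r. Vector_Spaces.linear scale (*) (\<Phi> i) \<and> (\<forall>z\<in>I. \<Phi> i z = 0)"
    "\<forall>i<?r. \<forall>j<?r. \<Phi> i (A (xs ! j)) = (if i = j then 1 else 0)"
    by simp_all
  then show ?thesis
    by (rule that)
qed

lemma eq_0_if_det_nonzero:
  assumes A: "Vector_Spaces.linear scale scale A"
    and \<phi>: "\<forall>i<length xs. Vector_Spaces.linear scale (*) (\<phi> i) \<and> (\<forall>z\<in>I. \<phi> i z = 0)"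
    and det: "det (mat (length xs) (length xs) (\<lambda>(i, j). \<phi> i (A (xs ! j)))) \<noteq> 0"
    and "distinct xs" "y \<in> span (set xs)" "A y \<in> I"
  shows "y = 0"
proof -
  interpret A: Vector_Spaces.linear scale scale A
    by (fact A)
  let ?r = "length xs" and ?M = "mat (length xs) (length xs) (\<lambda>(i, j). \<phi> i (A (xs ! j)))"
  obtain u where y: "y = (\<Sum>v\<in>set xs. scale (u v) v)"
    using assms(5) span_finite[of "set xs"] by auto
  define v where "v = vec ?r (\<lambda>j. u (xs ! j))"
  have Mv: "?M *\<^sub>v v = 0\<^sub>v ?r"
  proof (rule eq_vecI)
    fix i assume "i < dim_vec (0\<^sub>v ?r)"
    then have i: "i < ?r" by simp
    interpret lin: Vector_Spaces.linear scale "(*)" "\<phi> i"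
      using \<phi> i by blast
    have "(?M *\<^sub>v v) $ i = (\<Sum>j<?r. \<phi> i (A (xs ! j)) * u (xs ! j))"
      using i by (simp add: v_def scalar_prod_def lessThan_atLeast0)
    also have "\<dots> = (\<Sum>x\<in>set xs. u x * \<phi> i (A x))"
      using sum_distinct_set_conv_nth[OF assms(4), of "\<lambda>x. u x * \<phi> i (A x)"]
      by (simp add: ac_simps)
    also have "\<dots> = \<phi> i (A y)"
      unfolding y by (simp add: A.sum A.scale lin.sum lin.scale)
    also have "\<dots> = 0"
      using \<phi> i assms(6) by blast
    finally show "(?M *\<^sub>v v) $ i = 0\<^sub>v ?r $ i"
      using i by simp
  qed simp
  have "v \<in> carrier_vec ?r" "?M \<in> carrier_mat ?r ?r"
    by (simp_all add: v_def)
  then have "v = 0\<^sub>v ?r"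
    using det Mv det_0_iff_vec_prod_zero_field[of ?M ?r] by blast
  have "u (xs ! j) = 0" if "j < ?r" for j
  proof -
    have "v $ j = 0"
      using \<open>v = 0\<^sub>v ?r\<close> that by simp
    with that show ?thesis
      by (simp add: v_def)
  qed
  then show ?thesis
    unfolding y by (auto simp: in_set_conv_nth intro!: sum.neutral)
qed


lemma mem_if_det_nonzero:
  assumes A: "Vector_Spaces.linear scale scale A" and "subspace I" "\<forall>z\<in>I. A z \<in> I"
    and \<phi>: "\<forall>i<length xs. Vector_Spaces.linear scale (*) (\<phi> i) \<and> (\<forall>z\<in>I. \<phi> i z = 0)"
    and det: "det (mat (length xs) (length xs) (\<lambda>(i, j). \<phi> i (A (xs ! j)))) \<noteq> 0"
    and "distinct xs" "y \<in> span (set xs)" "f - y \<in> I" "A f \<in> I"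
  shows "f \<in> I"
proof -
  interpret A: Vector_Spaces.linear scale scale A
    by (fact A)
  have "A f - A (f - y) \<in> I"
    using assms(2,3,8,9) by (blast intro: subspace_diff)
  then have "A y \<in> I"
    by (simp add: A.diff)
  with A \<phi> det assms(6,7) have "y = 0"
    by (rule eq_0_if_det_nonzero)
  with assms(8) show ?thesis
    by simp
qed
end

lemma linear_mpoly_mult: "Vector_Spaces.linear mpoly_smult mpoly_smult (\<lambda>p. q * p :: 'a::field mpoly)"
  by unfold_locales (simp_all add: distrib_left mult.left_commute)

lemma lin_form_mult: "lin_form n c * p = (\<Sum>k<n. mpoly_smult (c k) (mvar k * p))"
  unfolding lin_form_def sum_distrib_right
  by (rule sum.cong) (simp_all add: mvar_def mult_single mult.assoc[symmetric])

lemma linear_lin_form_mult: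
  assumes "Vector_Spaces.linear mpoly_smult (*) \<phi>"
  shows "\<phi> (lin_form n c * p) = (\<Sum>k<n. \<phi> (mvar k * p) * (c k :: 'a::field))"
proof -
  interpret \<phi>: Vector_Spaces.linear mpoly_smult "(*)" \<phi>
    by (fact assms)
  show ?thesis
    unfolding lin_form_mult \<phi>.sum \<phi>.scale by (rule sum.cong) (rule refl, rule mult.commute)
qed

lemma lin_form_mult_mem:
  assumes "mpoly.subspace I" "\<forall>k<n. mvar k * p \<in> I"
  shows "lin_form n c * p \<in> I"
  unfolding lin_form_mult using assms by (intro mpoly.subspace_sum mpoly.subspace_scale) auto

lemma polys_det:
  assumes "\<And>i j. i < r \<Longrightarrow> j < r \<Longrightarrow> M $$ (i, j) \<in> polys n" "M \<in> carrier_mat r r"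
  shows "det M \<in> polys n"
proof -
  have "signof p \<in> polys n" for p :: "nat \<Rightarrow> nat"
    by (simp add: sign_def polys_uminus)
  moreover have "M $$ (i, p i) \<in> polys n" if "p permutes {0..<r}" "i \<in> {0..<r}" for p i
    using assms(1) that permutes_in_image[OF that(1)] by auto
  ultimately show ?thesis
    unfolding det_def'[OF assms(2)] by (intro polys_sum polys_mult polys_prod) auto
qed

lemma det_linear_entries_poly:
  fixes B :: "nat \<Rightarrow> nat \<Rightarrow> nat \<Rightarrow> 'a::comm_ring_1"
  obtains g where "g \<in> polys n" "\<And>c. mpeval g c = det (mat r r (\<lambda>(i, j). \<Sum>k<n. B i j k * c k))"
proof
  define M where "M = mat r r (\<lambda>(i, j). \<Sum>k<n. Poly_Mapping.single (var_exp k) (B i j k))"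
  show "det M \<in> polys n"
    by (rule polys_det[where r = r]) (auto simp: M_def keys_var_exp intro!: polys_sum polys_single)
  fix c
  have "map_mat (\<lambda>p. mpeval p c) M = mat r r (\<lambda>(i, j). \<Sum>k<n. B i j k * c k)"
    by (rule eq_matI) (simp_all add: M_def mpeval_sum mon_eval_var_exp)
  then show "mpeval (det M) c = det (mat r r (\<lambda>(i, j). \<Sum>k<n. B i j k * c k))"
    using comm_ring_hom.hom_det[OF comm_ring_hom_mpeval] by metis
qed

lemma mult_injective_modulo_open:
  fixes V I :: "'a::field mpoly set"
  assumes "mpoly.subspace V" "finite B" "V \<subseteq> mpoly.span B" "mpoly.subspace I"
    and I_mult: "\<forall>f\<in>I. \<forall>k<n. mvar k * f \<in> I"
    and inj0: "\<forall>f\<in>V. lin_form n c0 * f \<in> I \<longrightarrow> f \<in> I"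
  obtains g where "g \<in> polys n" "mpeval g c0 \<noteq> 0"
    "\<And>c. mpeval g c \<noteq> 0 \<Longrightarrow> \<forall>f\<in>V. lin_form n c * f \<in> I \<longrightarrow> f \<in> I"
proof -
  let ?A = "\<lambda>c p. lin_form n c * p"
  obtain X where X: "finite X" "X \<subseteq> V" "mpoly.independent X" "mpoly.span X \<inter> I \<subseteq> {0}"
    and approx: "\<forall>f\<in>V. \<exists>y\<in>mpoly.span X. f - y \<in> I"
    using mpoly.exists_complement_basis[OF assms(1,4,2,3)] by blast
  obtain xs where xs: "set xs = X" "distinct xs"
    using finite_distinct_list[OF X(1)] by blast
  let ?r = "length xs"
  have kernel: "v = 0" if "v \<in> mpoly.span (set xs)" "?A c0 v \<in> I" for v
  proof -
    have "v \<in> V"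
      using that(1) xs(1) mpoly.span_minimal[OF X(2) assms(1)] by blast
    with inj0 that(2) have "v \<in> I"
      by blast
    with that(1) xs(1) X(4) show ?thesis
      by blast
  qed
  obtain \<Phi> where \<Phi>: "\<forall>i<?r. Vector_Spaces.linear mpoly_smult (*) (\<Phi> i) \<and> (\<forall>z\<in>I. \<Phi> i z = 0)"
    and dual: "\<forall>i<?r. \<forall>j<?r. \<Phi> i (?A c0 (xs ! j)) = (if i = j then 1 else 0)"
    using mpoly.exists_dual_family[OF linear_mpoly_mult assms(4) _ xs(2) kernel] X(3) xs(1) by blast
  obtain g where g: "g \<in> polys n"
    and eval: "\<And>c. mpeval g c = det (mat ?r ?r (\<lambda>(i, j). \<Sum>k<n. \<Phi> i (mvar k * xs ! j) * c k))"
    using det_linear_entries_poly[where B = "\<lambda>i j k. \<Phi> i (mvar k * xs ! j)" and n = n and r = ?r] by blast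
  have matrix: "mat ?r ?r (\<lambda>(i, j). \<Sum>k<n. \<Phi> i (mvar k * xs ! j) * c k) =
      mat ?r ?r (\<lambda>(i, j). \<Phi> i (?A c (xs ! j)))" for c
    using \<Phi> by (intro cong_mat) (simp_all add: linear_lin_form_mult)
  show ?thesis
  proof
    show "g \<in> polys n" by (fact g)
    have "mat ?r ?r (\<lambda>(i, j). \<Phi> i (?A c0 (xs ! j))) = 1\<^sub>m ?r"
      using dual by (intro eq_matI) auto
    then show "mpeval g c0 \<noteq> 0"
      by (simp add: eval matrix)
  next
    fix c assume "mpeval g c \<noteq> 0"
    then have det: "det (mat ?r ?r (\<lambda>(i, j). \<Phi> i (?A c (xs ! j)))) \<noteq> 0"
      by (simp add: eval matrix)
    have "\<forall>z\<in>I. ?A c z \<in> I"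
      using I_mult by (blast intro: lin_form_mult_mem[OF assms(4)])
    note mem = mpoly.mem_if_det_nonzero[OF linear_mpoly_mult assms(4) this \<Phi> det xs(2)]
    show "\<forall>f\<in>V. ?A c f \<in> I \<longrightarrow> f \<in> I"
      using approx xs(1) mem by blast
  qed
qed

lemma finite_mons_of_degree:
  "finite {m::nat \<Rightarrow>\<^sub>0 nat. Poly_Mapping.keys m \<subseteq> {..<n} \<and> mon_deg m = k}"
proof -
  let ?M = "{m::nat \<Rightarrow>\<^sub>0 nat. Poly_Mapping.keys m \<subseteq> {..<n} \<and> mon_deg m = k}"
  let ?f = "\<lambda>m::nat \<Rightarrow>\<^sub>0 nat. restrict (Poly_Mapping.lookup m) {..<n}"
  have "inj_on ?f ?M"
  proof (rule inj_onI, rule poly_mapping_eqI)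
    fix m m' i assume m: "m \<in> ?M" "m' \<in> ?M" "?f m = ?f m'"
    have "i \<notin> Poly_Mapping.keys m" "i \<notin> Poly_Mapping.keys m'" if "\<not> i < n"
      using m that by auto
    then show "Poly_Mapping.lookup m i = Poly_Mapping.lookup m' i"
      using fun_cong[OF m(3), of i] by (cases "i < n") (simp_all add: in_keys_iff)
  qed
  moreover have "?f ` ?M \<subseteq> PiE {..<n} (\<lambda>_. {..k})"
  proof
    fix x assume "x \<in> ?f ` ?M"
    then obtain m where m: "m \<in> ?M" "x = ?f m"
      by blast
    have "Poly_Mapping.lookup m i \<le> k" for i
    proof (cases "i \<in> Poly_Mapping.keys m")
      case True
      then have "Poly_Mapping.lookup m i \<le> mon_deg m"
        unfolding mon_deg_def by (intro member_le_sum) auto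
      then show ?thesis
        using m by simp
    next
      case False
      then show ?thesis
        by (simp add: in_keys_iff)
    qed
    then show "x \<in> PiE {..<n} (\<lambda>_. {..k})"
      using m by auto
  qed
  moreover have "finite (PiE {..<n} (\<lambda>_. {..k::nat}))"
    by (intro finite_PiE) auto
  ultimately show ?thesis
    by (rule inj_on_finite)
qed

lemma homog_subset_span:
  "homog n k \<subseteq> mpoly.span ((\<lambda>m. Poly_Mapping.single m (1::'a::field))
     ` {m. Poly_Mapping.keys m \<subseteq> {..<n} \<and> mon_deg m = k})"
proof
  fix p :: "'a mpoly" assume p: "p \<in> homog n k"
  have "p = (\<Sum>m\<in>Poly_Mapping.keys p. mpoly_smult (Poly_Mapping.lookup p m) (Poly_Mapping.single m 1))"
    by (subst mpoly_eq_sum_singles) (simp add: mpoly_smult_single)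
  also have "\<dots> \<in> mpoly.span ((\<lambda>m. Poly_Mapping.single m 1)
      ` {m. Poly_Mapping.keys m \<subseteq> {..<n} \<and> mon_deg m = k})"
    using p unfolding homog_def polys_def
    by (intro mpoly.span_sum mpoly.span_scale mpoly.span_base) auto
  finally show "p \<in> mpoly.span ((\<lambda>m. Poly_Mapping.single m 1)
      ` {m. Poly_Mapping.keys m \<subseteq> {..<n} \<and> mon_deg m = k})" .
qed

lemma mpoly_subspace_homog: "mpoly.subspace (homog n k :: 'a::field mpoly set)"
  unfolding mpoly.subspace_def
proof (intro conjI ballI allI)
  fix x y :: "'a mpoly" assume "x \<in> homog n k" "y \<in> homog n k"
  then show "x + y \<in> homog n k"
    unfolding homog_def using polys_add keys_add[of x y] by blast
next
  fix c :: 'a and x :: "'a mpoly" assume "x \<in> homog n k"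
  then show "mpoly_smult c x \<in> homog n k"
    unfolding homog_def using polys_smult keys_smult_subset[of c x] by blast
qed (simp add: homog_def)

lemma general_linear_formI:
  assumes "g \<in> polys n" "mpeval g c0 \<noteq> 0" "c0 \<in> affine_space n"
    and "\<And>c. mpeval g c \<noteq> 0 \<Longrightarrow> Q (lin_form n c)"
  shows "general_linear_form n Q"
proof -
  let ?U = "{c \<in> affine_space n. \<exists>g'\<in>{g}. mpeval g' c \<noteq> 0}"
  have "zariski_open n ?U"
    unfolding zariski_open_def using assms(1) by blast
  moreover have "c0 \<in> ?U"
    using assms(2,3) by simp
  ultimately show ?thesis
    unfolding general_linear_form_def using assms(4) by blast
qed

lemma lin_form_indicator:
  assumes "N \<le> n"
  shows "lin_form n (\<lambda>i. if i < N then 1 else 0) = (var_sum {..<N} :: 'a::comm_ring_1 mpoly)"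
proof -
  have "lin_form n (\<lambda>i. if i < N then 1 else 0) = (\<Sum>i<n. if i < N then mvar i else (0::'a mpoly))"
    unfolding lin_form_def by (rule sum.cong) (auto simp: mvar_def)
  also have "\<dots> = (\<Sum>i\<in>{..<n} \<inter> {..<N}. mvar i)"
    by (simp add: sum.inter_restrict)
  also have "{..<n} \<inter> {..<N} = {..<N}"
    using assms by auto
  finally show ?thesis
    by (simp add: var_sum_def)
qed

lemma split_variables_bound:
  fixes n a d :: nat
  assumes "a \<ge> 2" "d \<ge> 1"
    and "real n \<ge> real_of_int \<lceil>2 * real d / (real a - 1)\<rceil> + (2 * real d - 1) / (real a - 1)"
  obtains N where "N \<le> n" "2 * d \<le> N * (a - 1)" "2 * d - 1 \<le> (n - N) * (a - 1)"
proof
  define N where "N = nat \<lceil>2 * real d / (real a - 1)\<rceil>"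
  have a1: "real a - 1 > 0" "real (a - 1) = real a - 1"
    using assms(1) by (simp_all add: of_nat_diff)
  have "0 \<le> 2 * real d / (real a - 1)"
    using a1 by (intro divide_nonneg_pos) auto
  then have N: "real N = real_of_int \<lceil>2 * real d / (real a - 1)\<rceil>"
    unfolding N_def by simp
  have "2 * real d / (real a - 1) \<le> real N"
    unfolding N by (rule le_of_int_ceiling)
  then have "2 * real d \<le> real N * (real a - 1)"
    using a1 by (simp add: pos_divide_le_eq)
  then have "real (2 * d) \<le> real (N * (a - 1))"
    using a1(2) by simp
  then show "2 * d \<le> N * (a - 1)"
    by linarith
  have rest: "(2 * real d - 1) / (real a - 1) \<le> real n - real N"
    using assms(3) N by simp
  moreover have "0 \<le> (2 * real d - 1) / (real a - 1)"
    using a1 assms(2) by (intro divide_nonneg_pos) auto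
  ultimately show "N \<le> n"
    by linarith
  from rest have "2 * real d - 1 \<le> (real n - real N) * (real a - 1)"
    using a1 by (simp add: pos_divide_le_eq)
  moreover have "real ((n - N) * (a - 1)) = (real n - real N) * (real a - 1)"
    using a1(2) \<open>N \<le> n\<close> by (simp add: of_nat_diff)
  moreover have "real (2 * d - 1) = 2 * real d - 1"
    using assms(2) by (simp add: of_nat_diff)
  ultimately show "2 * d - 1 \<le> (n - N) * (a - 1)"
    by linarith
qed

theorem mainTheorem1:
  fixes n a d :: nat
  assumes "n > 0" "a \<ge> 2" "d \<ge> a"
    and "real n \<ge> real_of_int \<lceil>2 * real d / (real a - 1)\<rceil> + (2 * real d - 1) / (real a - 1)"
  shows "general_linear_form n
           (\<lambda>L. mult_injective n (I_na n a :: 'a::field_char_0 mpoly set) L d)"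
proof -
  obtain N where N: "N \<le> n" "2 * d \<le> N * (a - 1)" "2 * d - 1 \<le> (n - N) * (a - 1)"
    using split_variables_bound[OF assms(2) _ assms(4)] assms(2,3) by auto
  define c0 where "c0 = (\<lambda>i. if i < N then 1 else (0::'a))"
  have "\<forall>f\<in>homog n (d - 1). lin_form n c0 * f \<in> I_na n a \<longrightarrow> f \<in> (I_na n a :: 'a mpoly set)"
    unfolding c0_def lin_form_indicator[OF N(1)]
    using var_sum_mult_injective[OF N(1) _ assms(3) N(2,3)] assms(2) by auto
  moreover have "\<forall>f\<in>I_na n a. \<forall>k<n. mvar k * f \<in> (I_na n a :: 'a mpoly set)"
    by (auto intro: I_na_mult polys_mvar)
  ultimately obtain g where g: "g \<in> polys n" "mpeval g c0 \<noteq> 0" and good: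
    "\<And>c. mpeval g c \<noteq> 0 \<Longrightarrow> \<forall>f\<in>homog n (d - 1). lin_form n c * f \<in> I_na n a \<longrightarrow> f \<in> I_na n a"
    using mult_injective_modulo_open[OF mpoly_subspace_homog finite_imageI[OF finite_mons_of_degree]
        homog_subset_span mpoly_subspace_I_na] by blast
  have "c0 \<in> affine_space n"
    using N(1) by (simp add: c0_def affine_space_def)
  with g show ?thesis
    unfolding mult_injective_def using good by (rule general_linear_formI)
qed

end
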